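(* Let $W$ be a matrix weight. The orthonormal system $H_W$ is complete in $L^2(W)$; i.e. if $f\in L^2(W)$ satisfies $\langle f,h\rangle_{L^2(W)}=0$ for every $h\in H_W$, then $f=0$. Hence $H_W$ is an orthonormal basis of $L^2(W)$.
   Context: A matrix weight is a $d\times d$ matrix-valued function on $\mathbb{R}$, positive definite a.e., with locally integrable entries; $L^2(W)$ has inner product $\langle f,g\rangle_{L^2(W)}=\int\langle W(x)f(x),g(x)\rangle_{\mathbb{C}^d}dx$. $\mathcal{D}$ is the standard dyadic grid, $J_\pm$ the right/left halves of $J$, $W(J)=\int_JW$. For $J\in\mathcal{D}$ let $v_J^1,\dots,v_J^d$ be an orthonormal eigenbasis of the positive definite matrix $W(J)W(J_+)^{-1}W(J_-)=W(J_-)W(J_+)^{-1}W(J_-)+W(J_-)$, $w_J^j=\|(W(J)W(J_+)^{-1}W(J_-))^{1/2}v_J^j\|$, and $h_J^{W,j}=(w_J^j)^{-1}\big(W(J_+)^{-1}W(J_-)v_J^j\mathbf{1}_{J_+}-v_J^j\mathbf{1}_{J_-}\big)$. Let $e_1,\dots,e_{p_1}$ be an orthonormal basis of $\{e\in\mathbb{C}^d:\mathbf{1}_{[0,\infty)}e\in L^2(W)\}$ and $h_1^{W,i}=c_1^i\mathbf{1}_{[0,\infty)}e_i$ normalized in $L^2(W)$; analogously $h_2^{W,i}=c_2^i\mathbf{1}_{(-\infty,0]}\nu_i$. $H_W=\{h_J^{W,j}\}\cup\{h_k^{W,i}\}$. *)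

theory Defs
  imports "HOL-Analysis.Analysis"
begin

definition cinner :: "complex^'n \<Rightarrow> complex^'n \<Rightarrow> complex" where
  "cinner x y = (\<Sum>i\<in>UNIV. x $ i * cnj (y $ i))"

definition adjoint_mat :: "complex^'n^'n \<Rightarrow> complex^'n^'n" where
  "adjoint_mat A = (\<chi> i j. cnj (A $ j $ i))"

definition hermitian_mat :: "complex^'n^'n \<Rightarrow> bool" where
  "hermitian_mat A \<longleftrightarrow> adjoint_mat A = A"

definition pos_def_mat :: "complex^'n^'n \<Rightarrow> bool" where
  "pos_def_mat A \<longleftrightarrow> hermitian_mat A \<and>
     (\<forall>x. x \<noteq> 0 \<longrightarrow> Re (cinner (A *v x) x) > 0)"

definition pos_semidef_mat :: "complex^'n^'n \<Rightarrow> bool" where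
  "pos_semidef_mat A \<longleftrightarrow> hermitian_mat A \<and>
     (\<forall>x. Re (cinner (A *v x) x) \<ge> 0)"

definition mat_sqrt :: "complex^'n^'n \<Rightarrow> complex^'n^'n" where
  "mat_sqrt M = (THE S. pos_semidef_mat S \<and> S ** S = M)"

text \<open>A family of vectors indexed by 'n (hence d vectors) is an orthonormal basis of C^d
  iff it is orthonormal.\<close>
definition orthonormal_family :: "('n \<Rightarrow> complex^'n) \<Rightarrow> bool" where
  "orthonormal_family v \<longleftrightarrow>
     (\<forall>i j. cinner (v i) (v j) = (if i = j then 1 else 0))"

definition orthonormal_eigenbasis :: "complex^'n^'n \<Rightarrow> ('n \<Rightarrow> complex^'n) \<Rightarrow> bool" where
  "orthonormal_eigenbasis M v \<longleftrightarrow> orthonormal_family v \<and>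
     (\<forall>j. \<exists>c. M *v v j = c *s v j)"

definition is_cONB :: "(complex^'n) set \<Rightarrow> (complex^'n) set \<Rightarrow> bool" where
  "is_cONB E V \<longleftrightarrow> finite E \<and> E \<subseteq> V \<and>
     (\<forall>e\<in>E. \<forall>e'\<in>E. cinner e e' = (if e = e' then 1 else 0)) \<and>
     V = {\<Sum>e\<in>E. c e *s e | c. True}"

definition matrix_weight :: "(real \<Rightarrow> complex^'n^'n) \<Rightarrow> bool" where
  "matrix_weight W \<longleftrightarrow>
     (\<forall>i j. (\<lambda>x. W x $ i $ j) \<in> borel_measurable lborel) \<and>
     (AE x in lborel. pos_def_mat (W x)) \<and>
     (\<forall>a b. \<forall>i j. set_integrable lborel {a..b} (\<lambda>x. W x $ i $ j))"

definition L2W :: "(real \<Rightarrow> complex^'n^'n) \<Rightarrow> (real \<Rightarrow> complex^'n) set" where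
  "L2W W = {f. f \<in> borel_measurable lborel \<and>
     integrable lborel (\<lambda>x. cinner (W x *v f x) (f x))}"

definition l2w_inner :: "(real \<Rightarrow> complex^'n^'n) \<Rightarrow> (real \<Rightarrow> complex^'n) \<Rightarrow> (real \<Rightarrow> complex^'n) \<Rightarrow> complex" where
  "l2w_inner W f g = integral\<^sup>L lborel (\<lambda>x. cinner (W x *v f x) (g x))"

definition l2w_norm :: "(real \<Rightarrow> complex^'n^'n) \<Rightarrow> (real \<Rightarrow> complex^'n) \<Rightarrow> real" where
  "l2w_norm W f = sqrt (Re (l2w_inner W f f))"

text \<open>The dyadic interval indexed by (n,k) is [k 2^-n, (k+1) 2^-n); every element of the
  standard dyadic grid arises from exactly one pair (n,k).\<close>
definition dyadic :: "int \<times> int \<Rightarrow> real set" where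
  "dyadic J = {real_of_int (snd J) / 2 powi (fst J) ..< real_of_int (snd J + 1) / 2 powi (fst J)}"

definition dyadic_left :: "int \<times> int \<Rightarrow> real set" where
  "dyadic_left J = dyadic (fst J + 1, 2 * snd J)"

definition dyadic_right :: "int \<times> int \<Rightarrow> real set" where
  "dyadic_right J = dyadic (fst J + 1, 2 * snd J + 1)"

definition Wint :: "(real \<Rightarrow> complex^'n^'n) \<Rightarrow> real set \<Rightarrow> complex^'n^'n" where
  "Wint W S = (\<chi> i j. set_lebesgue_integral lborel S (\<lambda>x. W x $ i $ j))"

definition haar_matrix :: "(real \<Rightarrow> complex^'n^'n) \<Rightarrow> int \<times> int \<Rightarrow> complex^'n^'n" where
  "haar_matrix W J = Wint W (dyadic J) ** matrix_inv (Wint W (dyadic_right J)) ** Wint W (dyadic_left J)"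

definition haar_weight :: "(real \<Rightarrow> complex^'n^'n) \<Rightarrow> int \<times> int \<Rightarrow> complex^'n \<Rightarrow> real" where
  "haar_weight W J v = norm (mat_sqrt (haar_matrix W J) *v v)"

definition haar_fun :: "(real \<Rightarrow> complex^'n^'n) \<Rightarrow> int \<times> int \<Rightarrow> complex^'n \<Rightarrow> real \<Rightarrow> complex^'n" where
  "haar_fun W J v x =
     complex_of_real (1 / haar_weight W J v) *s
       ((if x \<in> dyadic_right J then
           (matrix_inv (Wint W (dyadic_right J)) ** Wint W (dyadic_left J)) *v v else 0)
        - (if x \<in> dyadic_left J then v else 0))"

definition ind_vec :: "real set \<Rightarrow> complex^'n \<Rightarrow> real \<Rightarrow> complex^'n" where
  "ind_vec S e x = (if x \<in> S then e else 0)"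

definition admissible_vecs :: "(real \<Rightarrow> complex^'n^'n) \<Rightarrow> real set \<Rightarrow> (complex^'n) set" where
  "admissible_vecs W S = {e. ind_vec S e \<in> L2W W}"

definition normalized_ind :: "(real \<Rightarrow> complex^'n^'n) \<Rightarrow> real set \<Rightarrow> complex^'n \<Rightarrow> real \<Rightarrow> complex^'n" where
  "normalized_ind W S e x = complex_of_real (1 / l2w_norm W (ind_vec S e)) *s ind_vec S e x"

definition haar_system ::
  "(real \<Rightarrow> complex^'n^'n) \<Rightarrow> (int \<times> int \<Rightarrow> 'n \<Rightarrow> complex^'n) \<Rightarrow>
   (complex^'n) set \<Rightarrow> (complex^'n) set \<Rightarrow> (real \<Rightarrow> complex^'n) set" where
  "haar_system W v E1 E2 =
     {haar_fun W J (v J j) | J j. True}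
     \<union> {normalized_ind W {0..} e | e. e \<in> E1}
     \<union> {normalized_ind W {..0} e | e. e \<in> E2}"

end

theory Submission
  imports Defs
begin

(*
  Let f be in L^2(W) and orthogonal to every element of H_W.  Write
  M(S) = \<integral>_S W f  for the W-moment of f on S.  We say that f has W-average c on S
  if M(S) = W(S) c; on a dyadic interval such a c always exists and is unique,
  because W(J) is positive definite.

  1. Orthogonality to the Haar functions h_J^{W,j} (j ranging over an orthonormal
     eigenbasis) forces W(J_-) W(J_+)^{-1} M(J_+) = M(J_-); together with
     M(J) = M(J_+) + M(J_-) this shows that a W-average of f on J is also one on
     both halves J_-, J_+, and hence on every dyadic subinterval of J.
  2. The ancestors [0,2^N) of a dyadic interval in [0,\<infinity>) (resp. [-2^N,0) in
     (-\<infinity>,0)) form a single chain, so f has one common W-average c_+ (resp. c_-)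
     on all dyadic intervals of the right (resp. left) half-line.
  3. Then \<integral>_J W (f - c) = 0 for all these J, and a function whose integrals over
     all dyadic intervals of a half-line vanish is zero a.e. there; since W is
     positive definite a.e., f = c_\<pm> a.e. on the two half-lines.
  4. Consequently c_+ is admissible (1_{[0,\<infinity>)} c_+ lies in L^2(W)), so it is a
     combination of the orthonormal basis E1; orthogonality of f to the normalized
     functions 1_{[0,\<infinity>)} e, e \<in> E1, makes the weighted energy of c_+ on [0,\<infinity>)
     vanish, whence c_+ = 0.  Likewise c_- = 0.
*)

section \<open>Linear algebra on C^d\<close>

lemma cinner_add_left: "cinner (x + y) z = cinner x z + cinner y z"
  by (simp add: cinner_def sum.distrib algebra_simps)

lemma cinner_add_right: "cinner x (y + z) = cinner x y + cinner x z"
  by (simp add: cinner_def sum.distrib algebra_simps)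

lemma cinner_diff_left: "cinner (x - y) z = cinner x z - cinner y z"
  by (simp add: cinner_def sum_subtractf algebra_simps)

lemma cinner_diff_right: "cinner x (y - z) = cinner x y - cinner x z"
  by (simp add: cinner_def sum_subtractf algebra_simps)

lemma cinner_scale_left: "cinner (c *s x) y = c * cinner x y"
  by (simp add: cinner_def sum_distrib_left algebra_simps)

lemma cinner_scale_right: "cinner x (c *s y) = cnj c * cinner x y"
  by (simp add: cinner_def sum_distrib_left algebra_simps)

lemma cinner_zero_left [simp]: "cinner 0 y = 0"
  by (simp add: cinner_def)

lemma cinner_zero_right [simp]: "cinner x 0 = 0"
  by (simp add: cinner_def)

lemma cinner_sum_left: "cinner (sum f A) y = (\<Sum>a\<in>A. cinner (f a) y)"
  by (induction A rule: infinite_finite_induct) (auto simp: cinner_add_left)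

lemma cinner_sum_right: "cinner x (sum f A) = (\<Sum>a\<in>A. cinner x (f a))"
  by (induction A rule: infinite_finite_induct) (auto simp: cinner_add_right)

lemma cinner_commute: "cinner y x = cnj (cinner x y)"
  by (simp add: cinner_def cnj_sum mult.commute)

lemma cinner_self: "cinner x x = complex_of_real (norm x ^ 2)"
proof -
  have norm_sq: "norm x ^ 2 = (\<Sum>i\<in>UNIV. norm (x $ i) ^ 2)"
    by (simp add: norm_vec_def L2_set_def sum_nonneg)
  have "cinner x x = (\<Sum>i\<in>UNIV. complex_of_real (norm (x $ i) ^ 2))"
    unfolding cinner_def complex_norm_square by simp
  then show ?thesis
    using norm_sq by (simp only: of_real_sum)
qed

lemma cinner_axis: "cinner v (axis i 1) = v $ i"
proof -
  have "cinner v (axis i 1) = (\<Sum>j\<in>UNIV. if j = i then v $ i else 0)"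
    unfolding cinner_def by (rule sum.cong) (auto simp: axis_def)
  then show ?thesis by simp
qed

lemma hermitian_cinner:
  assumes "hermitian_mat A"
  shows "cinner (A *v x) y = cinner x (A *v y)"
proof -
  have A: "\<And>i j. A $ i $ j = cnj (A $ j $ i)"
    using assms unfolding hermitian_mat_def adjoint_mat_def
    by (metis vec_lambda_beta)
  have "cinner (A *v x) y = (\<Sum>i\<in>UNIV. \<Sum>j\<in>UNIV. A $ i $ j * x $ j * cnj (y $ i))"
    by (simp add: cinner_def matrix_vector_mult_def sum_distrib_right)
  also have "\<dots> = (\<Sum>j\<in>UNIV. \<Sum>i\<in>UNIV. A $ i $ j * x $ j * cnj (y $ i))"
    by (rule sum.swap)
  also have "\<dots> = cinner x (A *v y)"
    by (simp add: cinner_def matrix_vector_mult_def sum_distrib_left cnj_sum A[symmetric] algebra_simps)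
  finally show ?thesis .
qed

lemma hermitian_form_real:
  assumes "hermitian_mat A"
  shows "Im (cinner (A *v x) x) = 0"
proof -
  have "cinner (A *v x) x = cnj (cinner (A *v x) x)"
    using hermitian_cinner[OF assms, of x x] cinner_commute[of x "A *v x"] by simp
  then have "Im (cinner (A *v x) x) = - Im (cinner (A *v x) x)"
    by (metis complex_cnj_cancel_iff cnj.sel(2))
  then show ?thesis by simp
qed

lemma pos_def_mat_hermitian: "pos_def_mat A \<Longrightarrow> hermitian_mat A"
  unfolding pos_def_mat_def by blast

lemma pos_def_mat_kernel:
  assumes "pos_def_mat A" "A *v x = 0" shows "x = 0"
  using assms unfolding pos_def_mat_def by force

lemma pos_def_imp_semidef:
  assumes "pos_def_mat A"
  shows "pos_semidef_mat A"
  unfolding pos_semidef_mat_def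
proof (intro conjI allI)
  show "hermitian_mat A" using assms by (rule pos_def_mat_hermitian)
next
  fix u show "Re (cinner (A *v u) u) \<ge> 0"
    using assms unfolding pos_def_mat_def by (cases "u = 0") (auto simp: less_imp_le)
qed

lemma pos_def_mat_inverse:
  fixes A :: "complex^'n^'n"
  assumes "pos_def_mat A"
  shows "A ** matrix_inv A = mat 1"
proof -
  have "\<exists>B. B ** A = mat 1"
    using pos_def_mat_kernel[OF assms] matrix_left_invertible_ker by blast
  then have "invertible A" using invertible_left_inverse by blast
  then have "\<exists>A'. A ** A' = mat 1 \<and> A' ** A = mat 1" unfolding invertible_def by blast
  then have "A ** matrix_inv A = mat 1 \<and> matrix_inv A ** A = mat 1"
    unfolding matrix_inv_def by (rule someI_ex)
  then show ?thesis by blast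
qed

lemma pos_def_mat_inverse_apply:
  assumes "pos_def_mat A"
  shows "A *v (matrix_inv A *v y) = y"
  by (simp add: matrix_vector_mul_assoc pos_def_mat_inverse[OF assms])

text \<open>Arithmetic-geometric mean form of Cauchy--Schwarz for a positive semidefinite form;
  it provides the integrable majorants for the mixed terms of the weighted inner product.\<close>
lemma pos_semidef_form_bound:
  fixes A :: "complex^'n^'n"
  assumes "pos_semidef_mat A"
  shows "cmod (cinner (A *v x) y) \<le> (Re (cinner (A *v x) x) + Re (cinner (A *v y) y)) / 2"
proof -
  have herm: "hermitian_mat A" using assms unfolding pos_semidef_mat_def by blast
  have psd: "\<And>u. Re (cinner (A *v u) u) \<ge> 0" using assms unfolding pos_semidef_mat_def by blast
  define z where "z = cinner (A *v x) y"
  show ?thesis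
  proof (cases "z = 0")
    case True then show ?thesis using psd[of x] psd[of y] by (simp add: z_def)
  next
    case False
    \<comment> \<open>evaluate the form at w = x - s y with the phase s = z / |z|\<close>
    define s where "s = z / complex_of_real (cmod z)"
    define w where "w = x - s *s y"
    have yx: "cinner (A *v y) x = cnj z"
      unfolding z_def using hermitian_cinner[OF herm, of y x] cinner_commute[of "A *v x" y] by simp
    have Aw: "A *v w = A *v x - s *s (A *v y)" by (simp add: w_def vec.diff vec.scale)
    have e0: "cinner (A *v w) w = cinner (A *v x) x - cnj s * z - s * (cinner (A*v y) x - cnj s * cinner (A *v y) y)"
      unfolding Aw unfolding w_def cinner_diff_left cinner_diff_right cinner_scale_left cinner_scale_right z_def
      by (simp add: algebra_simps)
    have e: "cinner (A *v w) w = cinner (A *v x) x - cnj s * z - s * cnj z + (s * cnj s) * cinner (A *v y) y"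
      unfolding e0 yx by (simp add: right_diff_distrib)
    have zz: "z * cnj z = complex_of_real (cmod z) * complex_of_real (cmod z)"
      by (metis complex_norm_square of_real_mult power2_eq_square)
    have nz: "complex_of_real (cmod z) \<noteq> 0" using False by simp
    have 1: "cnj s * z = complex_of_real (cmod z)"
      using nz unfolding s_def by (simp add: mult.commute zz)
    have 2: "s * cnj z = complex_of_real (cmod z)"
      using nz unfolding s_def by (simp add: zz)
    have 3: "s * cnj s = 1"
      using nz unfolding s_def by (simp add: zz)
    have "Re (cinner (A *v w) w) = Re (cinner (A *v x) x) - 2 * cmod z + Re (cinner (A *v y) y)"
      using e 1 2 3 by simp
    with psd[of w] show ?thesis by (simp add: z_def)
  qed
qed

lemma orthonormal_familyD: "orthonormal_family v \<Longrightarrow> cinner (v i) (v j) = (if i = j then 1 else 0)"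
  unfolding orthonormal_family_def by blast

lemma orthogonal_set_independent:
  fixes S :: "(complex^'n) set"
  assumes "\<And>x y. x\<in>S \<Longrightarrow> y\<in>S \<Longrightarrow> x\<noteq>y \<Longrightarrow> cinner x y = 0" "0 \<notin> S"
  shows "vec.independent S"
proof
  assume "vec.dependent S"
  then obtain t u where t: "finite t" "t \<subseteq> S" "(\<Sum>v\<in>t. u v *s v) = 0" and "\<exists>v\<in>t. u v \<noteq> 0"
    unfolding vec.dependent_explicit by blast
  then obtain y where y: "y\<in>t" "u y \<noteq> 0" by blast
  have "0 = cinner (\<Sum>v\<in>t. u v *s v) y" using t by simp
  also have "\<dots> = (\<Sum>v\<in>t. u v * cinner v y)"
    by (simp add: cinner_sum_left cinner_scale_left)
  also have "\<dots> = u y * cinner y y + (\<Sum>v\<in>t-{y}. u v * cinner v y)"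
    using t y by (simp add: sum.remove)
  also have "(\<Sum>v\<in>t-{y}. u v * cinner v y) = 0"
    using t y assms(1) by (intro sum.neutral) auto
  finally have "u y * cinner y y = 0" by simp
  moreover have "y \<noteq> 0" using assms(2) t y by auto
  ultimately show False using y by (simp add: cinner_self)
qed

text \<open>An orthonormal family indexed by 'n has d = CARD('n) members, hence is complete:
  only the zero vector is orthogonal to all of it.\<close>
lemma orthonormal_family_complete:
  fixes v :: "'n \<Rightarrow> complex^'n"
  assumes "orthonormal_family v" "\<And>j. cinner w (v j) = 0"
  shows "w = 0"
proof (rule ccontr)
  assume w: "w \<noteq> 0"
  note vv = orthonormal_familyD[OF assms(1)]
  have injv: "inj v"
  proof
    fix i j assume "v i = v j"
    then have "cinner (v i) (v j) = 1" using vv[of j j] by simp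
    then show "i = j" using vv[of i j] by (auto split: if_splits)
  qed
  have wv: "w \<notin> range v"
  proof
    assume "w \<in> range v" then obtain j where "w = v j" by auto
    then show False using assms(2)[of j] vv[of j j] by simp
  qed
  let ?S = "insert w (range v)"
  have "vec.independent ?S"
  proof (rule orthogonal_set_independent)
    fix x y assume "x \<in> ?S" "y \<in> ?S" "x \<noteq> y"
    have wv': "cinner (v j) w = 0" for j
      using assms(2)[of j] cinner_commute[of "v j" w] by simp
    from \<open>x \<in> ?S\<close> \<open>y \<in> ?S\<close> \<open>x \<noteq> y\<close> show "cinner x y = 0"
      using assms(2) vv wv' by auto
  next
    have "v j \<noteq> 0" for j using vv[of j j] by auto
    then show "0 \<notin> ?S" using w by auto
  qed
  then have "card ?S \<le> CARD('n)"
    using vec.independent_card_le_dim[of ?S UNIV] vec_dim_card[where 'a=complex and 'n='n] by auto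
  moreover have "card ?S = CARD('n) + 1"
    using wv injv by (simp add: card_image)
  ultimately show False by simp
qed

lemma orthonormal_family_expansion:
  fixes v :: "'n \<Rightarrow> complex^'n"
  assumes "orthonormal_family v"
  shows "x = (\<Sum>j\<in>UNIV. cinner x (v j) *s v j)"
proof -
  note vv = orthonormal_familyD[OF assms]
  have "x - (\<Sum>j\<in>UNIV. cinner x (v j) *s v j) = 0"
  proof (rule orthonormal_family_complete[OF assms])
    fix k
    show "cinner (x - (\<Sum>j\<in>UNIV. cinner x (v j) *s v j)) (v k) = 0"
      by (simp add: cinner_diff_left cinner_sum_left cinner_scale_left vv if_distrib
          cong: if_cong)
  qed
  then show ?thesis by simp
qed

lemma matrix_eq_on_orthonormal_family:
  fixes A B :: "complex^'n^'n"
  assumes "orthonormal_family v" "\<And>j. A *v v j = B *v v j"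
  shows "A = B"
proof -
  have "A *v x = B *v x" for x
  proof -
    have "A *v x = A *v (\<Sum>j\<in>UNIV. cinner x (v j) *s v j)"
      using orthonormal_family_expansion[OF assms(1)] by metis
    also have "\<dots> = B *v (\<Sum>j\<in>UNIV. cinner x (v j) *s v j)"
      by (simp add: vec.sum vec.scale assms(2))
    also have "\<dots> = B *v x"
      using orthonormal_family_expansion[OF assms(1)] by metis
    finally show ?thesis .
  qed
  then show ?thesis using matrix_eq by blast
qed

lemma scaleC_smult: "a *s (b *s (x::complex^'n)) = (a * b) *s x"
  by (simp add: vec_eq_iff)

lemma of_real_smult: "complex_of_real r *s x = r *\<^sub>R (x::complex^'n)"
proof (subst vec_eq_iff, intro allI)
  fix i
  have "(r *\<^sub>R x) $ i = r *\<^sub>R (x $ i)" by (rule vector_scaleR_component)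
  also have "\<dots> = complex_of_real r * x $ i" by (rule scaleR_conv_of_real)
  finally show "(complex_of_real r *s x) $ i = (r *\<^sub>R x) $ i" by simp
qed

lemma psd_root_on_eigenvector:
  fixes S :: "complex^'n^'n"
  assumes "pos_semidef_mat S" "S ** S = H" "H *v x = complex_of_real c *s x" "c > 0"
  shows "S *v x = complex_of_real (sqrt c) *s x"
proof -
  let ?r = "complex_of_real (sqrt c)"
  define w where "w = S *v x - ?r *s x"
  have rr: "?r * ?r = complex_of_real c"
    using assms(4) by (simp flip: of_real_mult)
  have SSx: "S *v (S *v x) = H *v x" using assms(2) matrix_vector_mul_assoc by metis
  have "S *v w + ?r *s w = S *v (S *v x) - (?r * ?r) *s x"
    unfolding w_def by (simp add: vec.diff vec.scale scaleC_smult vector_ssub_ldistrib)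
  also have "\<dots> = 0" using SSx rr assms(3) by simp
  finally have "Re (cinner (S *v w + ?r *s w) w) = 0" by simp
  then have "Re (cinner (S *v w) w) + sqrt c * norm w ^ 2 = 0"
    by (simp add: cinner_add_left cinner_scale_left cinner_self)
  moreover have "Re (cinner (S *v w) w) \<ge> 0" using assms(1) unfolding pos_semidef_mat_def by blast
  ultimately have "sqrt c * norm w ^ 2 \<le> 0" by linarith
  then have "w = 0" using assms(4) by (simp add: mult_le_0_iff)
  then show ?thesis unfolding w_def by (simp add: right_minus_eq)
qed

definition spectral_mat :: "('n \<Rightarrow> complex^'n) \<Rightarrow> ('n \<Rightarrow> real) \<Rightarrow> complex^'n^'n" where
  "spectral_mat v r = (\<chi> a b. \<Sum>j\<in>UNIV. complex_of_real (r j) * (v j $ a) * cnj (v j $ b))"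

lemma spectral_mat_apply:
  "spectral_mat v r *v x = (\<Sum>j\<in>UNIV. (complex_of_real (r j) * cinner x (v j)) *s v j)"
proof -
  have "(spectral_mat v r *v x) $ a = (\<Sum>j\<in>UNIV. (complex_of_real (r j) * cinner x (v j)) * v j $ a)" for a
  proof -
    have "(spectral_mat v r *v x) $ a =
        (\<Sum>b\<in>UNIV. \<Sum>j\<in>UNIV. complex_of_real (r j) * (v j $ a) * cnj (v j $ b) * x $ b)"
      by (simp add: spectral_mat_def matrix_vector_mult_def sum_distrib_right)
    also have "\<dots> = (\<Sum>j\<in>UNIV. \<Sum>b\<in>UNIV. complex_of_real (r j) * (v j $ a) * cnj (v j $ b) * x $ b)"
      by (rule sum.swap)
    also have "\<dots> = (\<Sum>j\<in>UNIV. (complex_of_real (r j) * cinner x (v j)) * v j $ a)"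
      by (simp add: cinner_def sum_distrib_left sum_distrib_right algebra_simps)
    finally show ?thesis .
  qed
  then show ?thesis by (simp add: vec_eq_iff)
qed

lemma spectral_mat_pos_semidef:
  assumes "\<And>j. r j \<ge> 0"
  shows "pos_semidef_mat (spectral_mat v r)"
  unfolding pos_semidef_mat_def
proof (intro conjI allI)
  show "hermitian_mat (spectral_mat v r)"
    unfolding hermitian_mat_def adjoint_mat_def spectral_mat_def vec_eq_iff
    by (simp add: cnj_sum) (intro allI sum.cong, auto)
next
  fix x
  have "cinner (spectral_mat v r *v x) x =
      (\<Sum>j\<in>UNIV. complex_of_real (r j) * (cinner x (v j) * cnj (cinner x (v j))))"
    by (simp add: spectral_mat_apply cinner_sum_left cinner_scale_left cinner_commute[of "v _" x] mult.assoc)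
  also have "\<dots> = complex_of_real (\<Sum>j\<in>UNIV. r j * cmod (cinner x (v j)) ^ 2)"
    by (simp only: complex_norm_square of_real_mult of_real_sum)
  finally show "Re (cinner (spectral_mat v r *v x) x) \<ge> 0"
    using assms by (simp add: sum_nonneg)
qed

lemma spectral_mat_eigenvector:
  assumes "orthonormal_family v"
  shows "spectral_mat v r *v v k = complex_of_real (r k) *s v k"
proof -
  have "\<And>j. (complex_of_real (r j) * cinner (v k) (v j)) *s v j =
      (if j = k then complex_of_real (r k) *s v k else 0)"
    by (auto simp: orthonormal_familyD[OF assms])
  then show ?thesis by (simp add: spectral_mat_apply)
qed

lemma mat_sqrt_spectral:
  assumes onb: "orthonormal_family v"
    and e: "\<And>k. e k > 0" "\<And>k. H *v v k = complex_of_real (e k) *s v k"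
  shows "mat_sqrt H = spectral_mat v (\<lambda>k. sqrt (e k))"
  unfolding mat_sqrt_def
proof (rule the_equality)
  define S where "S = spectral_mat v (\<lambda>k. sqrt (e k))"
  have S_eig: "S *v v k = complex_of_real (sqrt (e k)) *s v k" for k
    unfolding S_def by (rule spectral_mat_eigenvector[OF onb])
  have "pos_semidef_mat S"
    unfolding S_def by (rule spectral_mat_pos_semidef) (use e(1) in \<open>simp add: less_imp_le\<close>)
  moreover have "S ** S = H"
  proof (rule matrix_eq_on_orthonormal_family[OF onb])
    fix k
    have "(S ** S) *v v k = complex_of_real (sqrt (e k) * sqrt (e k)) *s v k"
      by (simp only: matrix_vector_mul_assoc[symmetric] S_eig vec.scale scaleC_smult of_real_mult)
    also have "\<dots> = H *v v k" using e[of k] by simp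
    finally show "(S ** S) *v v k = H *v v k" .
  qed
  ultimately show "pos_semidef_mat S \<and> S ** S = H" by blast
  fix T assume T: "pos_semidef_mat T \<and> T ** T = H"
  show "T = S"
  proof (rule matrix_eq_on_orthonormal_family[OF onb])
    fix k show "T *v v k = S *v v k"
      using psd_root_on_eigenvector[OF _ _ e(2)[of k] e(1)[of k]] T S_eig[of k] by simp
  qed
qed

text \<open>For a positive Hermitian form H with orthonormal eigenbasis v, the matrix square root
  does not vanish on the eigenbasis (this makes the Haar functions well normalized).\<close>
lemma mat_sqrt_eigenvector_nonzero:
  fixes H :: "complex^'n^'n"
  assumes "orthonormal_eigenbasis H v"
    and pos: "\<And>x. x \<noteq> 0 \<Longrightarrow> Im (cinner (H *v x) x) = 0 \<and> Re (cinner (H *v x) x) > 0"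
  shows "mat_sqrt H *v v j \<noteq> 0"
proof -
  have onb: "orthonormal_family v" using assms(1) unfolding orthonormal_eigenbasis_def by blast
  have vnz: "v k \<noteq> 0" for k using orthonormal_familyD[OF onb, of k k] by auto
  have "\<exists>e. e > 0 \<and> H *v v k = complex_of_real e *s v k" for k
  proof -
    obtain c where c: "H *v v k = c *s v k"
      using assms(1) unfolding orthonormal_eigenbasis_def by blast
    have "cinner (H *v v k) (v k) = c"
      using c orthonormal_familyD[OF onb, of k k] by (simp add: cinner_scale_left)
    then have "Im c = 0" "Re c > 0" using pos[OF vnz[of k]] by auto
    then have "c = complex_of_real (Re c)" by (simp add: complex_eq_iff)
    then show ?thesis using c \<open>Re c > 0\<close> by metis
  qed
  then obtain e where e: "\<And>k. e k > 0" "\<And>k. H *v v k = complex_of_real (e k) *s v k"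
    by metis
  show ?thesis
    unfolding mat_sqrt_spectral[OF onb e] spectral_mat_eigenvector[OF onb]
    using e(1)[of j] vnz[of j] by (simp add: of_real_smult)
qed

section \<open>Measurability and integration tools\<close>

lemma measurable_vec_nth:
  fixes g :: "'a \<Rightarrow> complex^'n"
  assumes "g \<in> borel_measurable M"
  shows "(\<lambda>x. g x $ i) \<in> borel_measurable M"
proof -
  have "(\<lambda>y::complex^'n. y $ i) \<in> borel_measurable borel"
    by (rule borel_measurable_continuous_onI, rule linear_continuous_on, rule bounded_linear_vec_nth)
  from measurable_compose[OF assms this] show ?thesis by (simp add: o_def)
qed

lemma measurable_vec_componentwise:
  fixes g :: "'a \<Rightarrow> complex^'n"
  assumes "\<And>i. (\<lambda>x. g x $ i) \<in> borel_measurable M"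
  shows "g \<in> borel_measurable M"
proof (subst borel_measurable_euclidean_space, intro ballI)
  fix b :: "complex^'n" assume "b \<in> Basis"
  then obtain i u where b: "b = axis i u" unfolding Basis_vec_def by blast
  have "(\<lambda>x. g x $ i \<bullet> u) \<in> borel_measurable M"
    by (rule borel_measurable_inner[OF assms[of i] borel_measurable_const])
  then show "(\<lambda>x. g x \<bullet> b) \<in> borel_measurable M" unfolding b inner_axis .
qed

lemma measurable_cnj:
  assumes "g \<in> borel_measurable M"
  shows "(\<lambda>x. cnj (g x)) \<in> borel_measurable M"
proof -
  have "cnj \<in> borel_measurable borel"
    by (rule borel_measurable_continuous_onI, rule continuous_on_cnj, rule continuous_on_id)
  from measurable_compose[OF assms this] show ?thesis by (simp add: o_def)
qed

lemma measurable_cinner: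
  fixes F G :: "'a \<Rightarrow> complex^'n"
  assumes "F \<in> borel_measurable M" "G \<in> borel_measurable M"
  shows "(\<lambda>x. cinner (F x) (G x)) \<in> borel_measurable M"
  unfolding cinner_def
  by (intro borel_measurable_sum borel_measurable_times measurable_cnj measurable_vec_nth assms)

lemma set_integrable_lincomb:
  fixes h :: "'k \<Rightarrow> 'a \<Rightarrow> complex"
  assumes "\<And>k. k \<in> K \<Longrightarrow> set_integrable M S (h k)"
  shows "set_integrable M S (\<lambda>x. \<Sum>k\<in>K. h k x * c k)"
proof -
  have "integrable M (\<lambda>x. \<Sum>k\<in>K. (indicator S x *\<^sub>R h k x) * c k)"
    using assms unfolding set_integrable_def
    by (intro Bochner_Integration.integrable_sum integrable_mult_left) auto
  then show ?thesis unfolding set_integrable_def by (simp add: scaleR_sum_right)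
qed

lemma set_integral_lincomb:
  fixes h :: "'k \<Rightarrow> 'a \<Rightarrow> complex"
  assumes "\<And>k. k \<in> K \<Longrightarrow> set_integrable M S (h k)"
  shows "(\<Sum>k\<in>K. set_lebesgue_integral M S (h k) * c k) =
    set_lebesgue_integral M S (\<lambda>x. \<Sum>k\<in>K. h k x * c k)"
proof -
  have "set_lebesgue_integral M S (\<lambda>x. \<Sum>k\<in>K. h k x * c k) =
      integral\<^sup>L M (\<lambda>x. \<Sum>k\<in>K. (indicator S x *\<^sub>R h k x) * c k)"
    unfolding set_lebesgue_integral_def by (simp add: scaleR_sum_right)
  also have "\<dots> = (\<Sum>k\<in>K. integral\<^sup>L M (\<lambda>x. (indicator S x *\<^sub>R h k x) * c k))"
    using assms unfolding set_integrable_def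
    by (intro Bochner_Integration.integral_sum integrable_mult_left) auto
  also have "\<dots> = (\<Sum>k\<in>K. set_lebesgue_integral M S (h k) * c k)"
    unfolding set_lebesgue_integral_def by (rule sum.cong[OF refl], rule integral_mult_left_zero)
  finally show ?thesis by simp
qed

lemma set_integral_cnj:
  "cnj (set_lebesgue_integral M S g) = set_lebesgue_integral M S (\<lambda>x. cnj (g x))"
  unfolding set_lebesgue_integral_def
  by (simp add: Bochner_Integration.integral_cnj[symmetric] complex_cnj_scaleR)

lemma emeasure_pos_if_interval:
  fixes a b :: real
  assumes "a < b" "{a..b} \<subseteq> S" "S \<in> sets lborel"
  shows "emeasure lborel S > (0::ennreal)"
proof -
  have "emeasure lborel {a..b} \<le> emeasure lborel S" by (rule emeasure_mono) (use assms in auto)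
  moreover have "0 < emeasure lborel {a..b}" using assms(1) by (simp add: emeasure_lborel_Icc_eq)
  ultimately show ?thesis by (rule order_less_le_trans[rotated])
qed

section \<open>Dyadic intervals\<close>

lemma dyadic_eq: "dyadic (n, k) = {real_of_int k / 2 powi n ..< real_of_int (k + 1) / 2 powi n}"
  by (simp add: dyadic_def)

lemma dyadic_nat: "dyadic (int n, k) = {real_of_int k / 2^n ..< real_of_int (k+1) / 2^n}"
  by (simp add: dyadic_def power_int_of_nat)

lemma two_powi_Suc: "(2::real) powi (n + 1) = 2 * 2 powi n"
  by (simp add: power_int_add_1)

lemma dyadic_left_eq:
  "dyadic_left (n, k) = {real_of_int k / 2 powi n ..< (2 * real_of_int k + 1) / (2 * 2 powi n)}"
proof -
  have "real_of_int (2 * k) / (2 * 2 powi n) = real_of_int k / 2 powi n" by simp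
  then show ?thesis by (simp add: dyadic_left_def dyadic_def two_powi_Suc)
qed

lemma dyadic_right_eq:
  "dyadic_right (n, k) = {(2 * real_of_int k + 1) / (2 * 2 powi n) ..< real_of_int (k + 1) / 2 powi n}"
proof -
  have "real_of_int (2 * k + 1 + 1) / (2 * 2 powi n) = real_of_int (k + 1) / 2 powi n"
    by (simp add: field_simps)
  then show ?thesis by (simp add: dyadic_right_def dyadic_def two_powi_Suc)
qed

lemma dyadic_split:
  "dyadic J = dyadic_left J \<union> dyadic_right J" "dyadic_left J \<inter> dyadic_right J = {}"
proof -
  obtain n k where J: "J = (n, k)" by (cases J)
  have p: "(2::real) powi n > 0" by simp
  let ?a = "real_of_int k / 2 powi n" and ?m = "(2 * real_of_int k + 1) / (2 * 2 powi n)"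
    and ?b = "real_of_int (k + 1) / 2 powi n"
  have am: "?a \<le> ?m" using p by (simp add: field_simps)
  have mb: "?m \<le> ?b" using p by (simp add: field_simps)
  show "dyadic J = dyadic_left J \<union> dyadic_right J"
    unfolding J dyadic_eq dyadic_left_eq dyadic_right_eq using am mb by auto
  show "dyadic_left J \<inter> dyadic_right J = {}"
    unfolding J dyadic_left_eq dyadic_right_eq by auto
qed

lemma dyadic_left_sub: "dyadic_left J \<subseteq> dyadic J"
  and dyadic_right_sub: "dyadic_right J \<subseteq> dyadic J"
  using dyadic_split[of J] by auto

lemma dyadic_bounded: "\<exists>p q. dyadic J \<subseteq> {p..q}"
  unfolding dyadic_def using atLeastLessThan_subseteq_atLeastAtMost_iff by blast

lemma dyadic_sets [measurable]: "dyadic J \<in> sets lborel"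
  by (cases J) (simp add: dyadic_eq)

lemma dyadic_left_sets [measurable]: "dyadic_left J \<in> sets lborel"
  unfolding dyadic_left_def by (rule dyadic_sets)

lemma dyadic_right_sets [measurable]: "dyadic_right J \<in> sets lborel"
  unfolding dyadic_right_def by (rule dyadic_sets)

lemma dyadic_pos: "emeasure lborel (dyadic J) > 0"
proof -
  obtain n k where J: "J = (n, k)" by (cases J)
  have "real_of_int k / 2 powi n < real_of_int (k + 1) / 2 powi n"
    by (simp add: divide_strict_right_mono)
  then show ?thesis unfolding J dyadic_eq by (simp add: emeasure_lborel_Ico)
qed

lemma dyadic_left_pos: "emeasure lborel (dyadic_left J) > 0"
  by (simp add: dyadic_left_def dyadic_pos)

lemma dyadic_right_pos: "emeasure lborel (dyadic_right J) > 0"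
  by (simp add: dyadic_right_def dyadic_pos)

section \<open>Functions with vanishing integrals over dyadic intervals\<close>

text \<open>We pass from dyadic
  intervals to arbitrary intervals [a,b) by dyadic rounding of the endpoints and dominated
  convergence, and from intervals to almost-everywhere vanishing by uniqueness of measures
  determined by their values on rays.\<close>

abbreviation locally_integrable :: "(real \<Rightarrow> 'a::{banach, second_countable_topology}) \<Rightarrow> bool" where
  "locally_integrable g \<equiv> \<forall>a b. set_integrable lborel {a..b} g"

lemma set_integral_dyadic_split:
  fixes g :: "real \<Rightarrow> 'a::{banach, second_countable_topology}"
  assumes "locally_integrable g"
  shows "set_lebesgue_integral lborel (dyadic J) g =
    set_lebesgue_integral lborel (dyadic_right J) g + set_lebesgue_integral lborel (dyadic_left J) g"
proof -
  obtain p q where pq: "dyadic J \<subseteq> {p..q}" using dyadic_bounded by blast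
  have iL: "set_integrable lborel (dyadic_left J) g"
    by (rule set_integrable_subset[OF assms[rule_format, of p q] dyadic_left_sets])
      (use pq dyadic_left_sub in blast)
  have iR: "set_integrable lborel (dyadic_right J) g"
    by (rule set_integrable_subset[OF assms[rule_format, of p q] dyadic_right_sets])
      (use pq dyadic_right_sub in blast)
  show ?thesis unfolding dyadic_split(1)[of J]
    using set_integral_Un[OF dyadic_split(2)[of J] iL iR] by (simp add: add.commute)
qed

lemma set_integral_dyadic_union_zero:
  fixes g :: "real \<Rightarrow> 'a::{banach, second_countable_topology}" and n :: nat
  assumes loc: "locally_integrable g"
    and zero: "\<And>k. i \<le> k \<Longrightarrow> k < j \<Longrightarrow>
      set_lebesgue_integral lborel {real_of_int k / 2^n ..< real_of_int (k+1) / 2^n} g = 0"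
    and ij: "i \<le> j"
  shows "set_lebesgue_integral lborel {real_of_int i / 2^n ..< real_of_int j / 2^n} g = 0"
  using ij zero
proof (induction j rule: int_ge_induct)
  case base then show ?case by (simp add: set_lebesgue_integral_def)
next
  case (step j)
  let ?a = "real_of_int i / 2^n" and ?b = "real_of_int j / 2^n" and ?c = "real_of_int (j+1) / 2^n"
  have ab: "?a \<le> ?b" using step.hyps by (simp add: divide_right_mono)
  have bc: "?b \<le> ?c" by (simp add: divide_right_mono)
  have un: "{?a..<?c} = {?a..<?b} \<union> {?b..<?c}" using ab bc by auto
  have i1: "set_integrable lborel {?a..<?b} g" by (rule set_integrable_subset[OF loc[rule_format, of ?a ?b]]) auto
  have i2: "set_integrable lborel {?b..<?c} g" by (rule set_integrable_subset[OF loc[rule_format, of ?b ?c]]) auto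
  have "set_lebesgue_integral lborel {?a..<?c} g =
      set_lebesgue_integral lborel {?a..<?b} g + set_lebesgue_integral lborel {?b..<?c} g"
    unfolding un by (rule set_integral_Un[OF _ i1 i2]) auto
  also have "set_lebesgue_integral lborel {?a..<?b} g = 0" using step by auto
  also have "set_lebesgue_integral lborel {?b..<?c} g = 0" using step by auto
  finally show ?case by simp
qed

definition dyadic_floor :: "nat \<Rightarrow> real \<Rightarrow> real" where
  "dyadic_floor m x = real_of_int \<lfloor>x * 2^m\<rfloor> / 2^m"

lemma dyadic_floor_le: "dyadic_floor m x \<le> x"
proof -
  have "real_of_int \<lfloor>x * 2^m\<rfloor> \<le> x * 2^m" by (rule of_int_floor_le)
  then show ?thesis unfolding dyadic_floor_def by (simp add: divide_le_eq)
qed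

lemma dyadic_floor_gt: "x - 1 / 2^m < dyadic_floor m x"
proof -
  have "x * 2^m - 1 < real_of_int \<lfloor>x * 2^m\<rfloor>" using real_of_int_floor_add_one_gt[of "x * 2^m"] by simp
  then have "(x * 2^m - 1) / 2^m < real_of_int \<lfloor>x * 2^m\<rfloor> / 2^m" by (simp add: divide_strict_right_mono)
  then show ?thesis unfolding dyadic_floor_def by (simp add: diff_divide_distrib)
qed

lemma dyadic_floor_tendsto: "(\<lambda>m. dyadic_floor m x) \<longlonglongrightarrow> x"
proof (rule tendsto_sandwich[where f="\<lambda>m. x - 1 / 2^m" and h="\<lambda>m. x"])
  show "eventually (\<lambda>m. x - 1 / 2^m \<le> dyadic_floor m x) sequentially"
    by (intro always_eventually allI less_imp_le dyadic_floor_gt)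
  show "eventually (\<lambda>m. dyadic_floor m x \<le> x) sequentially"
    by (intro always_eventually allI dyadic_floor_le)
  have "(\<lambda>m. 1 / (2::real)^m) \<longlonglongrightarrow> 0"
    using LIMSEQ_inverse_realpow_zero[of 2] by (simp add: inverse_eq_divide)
  then show "(\<lambda>m. x - 1 / 2^m) \<longlonglongrightarrow> x"
    using tendsto_diff[OF tendsto_const, of _ 0 sequentially x] by simp
qed simp

lemma indicator_Ico_tendsto:
  fixes a b x :: real
  assumes A: "A \<longlonglongrightarrow> a" and B: "B \<longlonglongrightarrow> b" and "x \<noteq> a" "x \<noteq> b"
  shows "(\<lambda>m. indicator {A m..<B m} x :: real) \<longlonglongrightarrow> indicator {a..<b} x"
proof (rule tendsto_eventually)
  consider "x < a" | "b < x" | "a < x" "x < b" using assms(3,4) by fastforce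
  then show "eventually (\<lambda>m. (indicator {A m..<B m} x :: real) = indicator {a..<b} x) sequentially"
  proof cases
    case 1
    from order_tendstoD(1)[OF A 1] show ?thesis
      by eventually_elim (use 1 in \<open>auto simp: indicator_def\<close>)
  next
    case 2
    from order_tendstoD(2)[OF B 2] show ?thesis
      by eventually_elim (use 2 in \<open>auto simp: indicator_def\<close>)
  next
    case 3
    from order_tendstoD(2)[OF A 3(1)] order_tendstoD(1)[OF B 3(2)] show ?thesis
      by eventually_elim (use 3 in \<open>auto simp: indicator_def\<close>)
  qed
qed

lemma locally_integrable_measurable:
  fixes g :: "real \<Rightarrow> 'a::{banach, second_countable_topology}"
  assumes loc: "locally_integrable g"
  shows "g \<in> borel_measurable lborel"
proof (rule borel_measurable_LIMSEQ_metric[where f="\<lambda>n x. indicator {- real n .. real n} x *\<^sub>R g x"])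
  show "(\<lambda>x. indicator {- real n .. real n} x *\<^sub>R g x) \<in> borel_measurable lborel" for n
    using loc[rule_format, of "- real n" "real n"] unfolding set_integrable_def
    by (rule borel_measurable_integrable)
  show "(\<lambda>n. indicator {- real n .. real n} x *\<^sub>R g x) \<longlonglongrightarrow> g x" for x
  proof (rule tendsto_eventually)
    obtain N :: nat where "\<bar>x\<bar> \<le> real N" using real_arch_simple by blast
    then show "eventually (\<lambda>n. indicator {- real n .. real n} x *\<^sub>R g x = g x) sequentially"
      unfolding eventually_sequentially by (intro exI[of _ N]) (auto simp: indicator_def)
  qed
qed

lemma set_integral_Ico_tendsto:
  fixes g :: "real \<Rightarrow> 'a::{banach, second_countable_topology}"
  assumes loc: "locally_integrable g" and A: "A \<longlonglongrightarrow> a" and B: "B \<longlonglongrightarrow> b"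
  shows "(\<lambda>m. set_lebesgue_integral lborel {A m..<B m} g) \<longlonglongrightarrow> set_lebesgue_integral lborel {a..<b} g"
proof -
  obtain KA where KA: "\<And>m. norm (A m) \<le> KA"
    using convergent_imp_Bseq[OF convergentI[OF A]] unfolding Bseq_def by blast
  obtain KB where KB: "\<And>m. norm (B m) \<le> KB"
    using convergent_imp_Bseq[OF convergentI[OF B]] unfolding Bseq_def by blast
  define C where "C = max KA KB"
  have gm [measurable]: "g \<in> borel_measurable lborel" by (rule locally_integrable_measurable[OF loc])
  have bound: "integrable lborel (\<lambda>x. indicator {-C..C} x *\<^sub>R norm (g x))"
    using set_integrable_norm[OF loc[rule_format, of "-C" C]] unfolding set_integrable_def .
  show ?thesis
    unfolding set_lebesgue_integral_def
  proof (rule integral_dominated_convergence[OF _ _ bound])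
    show "AE x in lborel. (\<lambda>i. indicat_real {A i..<B i} x *\<^sub>R g x) \<longlonglongrightarrow> indicat_real {a..<b} x *\<^sub>R g x"
      using AE_lborel_singleton[of a] AE_lborel_singleton[of b]
      by eventually_elim (intro tendsto_scaleR tendsto_const indicator_Ico_tendsto A B)
    show "AE x in lborel. norm (indicat_real {A i..<B i} x *\<^sub>R g x) \<le> indicator {-C..C} x *\<^sub>R norm (g x)" for i
    proof (rule AE_I2)
      fix x
      have "- C \<le> A i" "B i \<le> C" using KA[of i] KB[of i] unfolding C_def by auto
      then show "norm (indicat_real {A i..<B i} x *\<^sub>R g x) \<le> indicator {-C..C} x *\<^sub>R norm (g x)"
        by (auto simp: indicator_def)
    qed
  qed measurable
qed

lemma set_integral_Ico_zero_from_dyadic: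
  fixes g :: "real \<Rightarrow> 'a::{banach, second_countable_topology}" and R :: "real set"
  assumes loc: "locally_integrable g"
    and zero: "\<And>n k. real_of_int k / 2^n \<in> R \<Longrightarrow> real_of_int (k+1) / 2^n \<in> R \<Longrightarrow>
              set_lebesgue_integral lborel {real_of_int k / 2^n ..< real_of_int (k+1) / 2^n} g = 0"
    and floor_R: "\<And>m x. x \<in> R \<Longrightarrow> dyadic_floor m x \<in> R"
    and convex_R: "\<And>x y z. x \<in> R \<Longrightarrow> z \<in> R \<Longrightarrow> x \<le> y \<Longrightarrow> y \<le> z \<Longrightarrow> y \<in> R"
    and aR: "a \<in> R" and bR: "b \<in> R" and ab: "a \<le> b"
  shows "set_lebesgue_integral lborel {a..<b} g = 0"
proof -
  have rounded: "set_lebesgue_integral lborel {dyadic_floor m a..<dyadic_floor m b} g = 0" for m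
  proof -
    let ?i = "\<lfloor>a * 2^m\<rfloor>" and ?j = "\<lfloor>b * 2^m\<rfloor>"
    have ij: "?i \<le> ?j" using ab by (intro floor_mono mult_right_mono) simp_all
    have ends: "dyadic_floor m a \<in> R" "dyadic_floor m b \<in> R" using floor_R aR bR by auto
    have "set_lebesgue_integral lborel {real_of_int ?i / 2^m ..< real_of_int ?j / 2^m} g = 0"
    proof (rule set_integral_dyadic_union_zero[OF loc _ ij])
      fix k assume k: "?i \<le> k" "k < ?j"
      have l1: "dyadic_floor m a \<le> real_of_int k / 2^m"
        unfolding dyadic_floor_def using k by (intro divide_right_mono) simp_all
      have l2: "real_of_int (k + 1) / 2^m \<le> dyadic_floor m b"
        unfolding dyadic_floor_def using k by (intro divide_right_mono) simp_all
      have l3: "real_of_int k / 2^m \<le> real_of_int (k + 1) / 2^m"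
        by (intro divide_right_mono) simp_all
      show "set_lebesgue_integral lborel {real_of_int k / 2^m ..< real_of_int (k+1) / 2^m} g = 0"
        by (rule zero; rule convex_R[OF ends]) (use l1 l2 l3 in linarith)+
    qed
    then show ?thesis unfolding dyadic_floor_def .
  qed
  have "(\<lambda>m. set_lebesgue_integral lborel {dyadic_floor m a..<dyadic_floor m b} g)
      \<longlonglongrightarrow> set_lebesgue_integral lborel {a..<b} g"
    by (rule set_integral_Ico_tendsto[OF loc dyadic_floor_tendsto dyadic_floor_tendsto])
  then show ?thesis unfolding rounded LIMSEQ_const_iff by simp
qed

lemma emeasure_density_ray:
  fixes k :: "real \<Rightarrow> real"
  assumes ik: "integrable lborel k" and nn: "\<And>y. k y \<ge> 0"
  shows "emeasure (density lborel (\<lambda>y. ennreal (k y))) {x<..} =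
    ennreal (integral\<^sup>L lborel (\<lambda>y. k y * indicator {x<..} y))"
proof -
  have [measurable]: "k \<in> borel_measurable lborel" using ik by (rule borel_measurable_integrable)
  have "emeasure (density lborel (\<lambda>y. ennreal (k y))) {x<..} =
      (\<integral>\<^sup>+ y. ennreal (k y) * indicator {x<..} y \<partial>lborel)"
    by (rule emeasure_density) (auto intro!: borel_open)
  also have "\<dots> = (\<integral>\<^sup>+ y. ennreal (k y * indicator {x<..} y) \<partial>lborel)"
    by (intro nn_integral_cong) (auto simp: indicator_def)
  also have "\<dots> = ennreal (integral\<^sup>L lborel (\<lambda>y. k y * indicator {x<..} y))"
  proof (rule nn_integral_eq_integral)
    show "integrable lborel (\<lambda>y. k y * indicator {x<..} y)"
      using integrable_mult_indicator[OF _ ik, of "{x<..}"] by (simp add: mult.commute)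
  qed (use nn in \<open>simp add: indicator_def\<close>)
  finally show ?thesis .
qed

text \<open>An integrable real function whose integrals over all rays (x,\<infinity>) vanish is zero a.e.:
  its positive and negative parts are densities of finite measures that agree on all rays,
  hence coincide.\<close>
lemma AE_zero_of_ray_integrals:
  fixes h :: "real \<Rightarrow> real"
  assumes ih: "integrable lborel h"
    and ray: "\<And>x. integral\<^sup>L lborel (\<lambda>y. indicator {x<..} y * h y) = 0"
  shows "AE y in lborel. h y = 0"
proof -
  define hp where "hp = (\<lambda>y. (\<bar>h y\<bar> + h y) / 2)"
  define hn where "hn = (\<lambda>y. (\<bar>h y\<bar> - h y) / 2)"
  have ihp: "integrable lborel hp"
    unfolding hp_def using ih by (intro integrable_divide Bochner_Integration.integrable_add integrable_abs)
  have ihn: "integrable lborel hn"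
    unfolding hn_def using ih by (intro integrable_divide Bochner_Integration.integrable_diff integrable_abs)
  have [measurable]: "hp \<in> borel_measurable lborel" "hn \<in> borel_measurable lborel"
    using ihp ihn by (simp_all add: borel_measurable_integrable)
  have hpn: "hp y \<ge> 0" "hn y \<ge> 0" for y unfolding hp_def hn_def by auto
  have equal_rays: "integral\<^sup>L lborel (\<lambda>y. hp y * indicator {x<..} y) =
      integral\<^sup>L lborel (\<lambda>y. hn y * indicator {x<..} y)" for x
  proof -
    have i1: "integrable lborel (\<lambda>y. hp y * indicator {x<..} y)"
      using integrable_mult_indicator[OF _ ihp, of "{x<..}"] by (simp add: mult.commute)
    have i2: "integrable lborel (\<lambda>y. hn y * indicator {x<..} y)"
      using integrable_mult_indicator[OF _ ihn, of "{x<..}"] by (simp add: mult.commute)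
    have "(\<lambda>y. hp y * indicator {x<..} y - hn y * indicator {x<..} y) = (\<lambda>y. indicator {x<..} y * h y)"
      by (auto simp: hp_def hn_def fun_eq_iff field_simps)
    then show ?thesis
      using ray[of x] Bochner_Integration.integral_diff[OF i1 i2] by simp
  qed
  have "density lborel (\<lambda>y. ennreal (hp y)) = density lborel (\<lambda>y. ennreal (hn y))"
  proof (rule measure_eqI_lessThan)
    show "sets (density lborel (\<lambda>y. ennreal (hp y))) = sets borel"
      "sets (density lborel (\<lambda>y. ennreal (hn y))) = sets borel" by simp_all
    show "emeasure (density lborel (\<lambda>y. ennreal (hp y))) {x<..} < \<infinity>" for x
      unfolding emeasure_density_ray[OF ihp hpn(1)] by simp
    show "emeasure (density lborel (\<lambda>y. ennreal (hp y))) {x<..} =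
        emeasure (density lborel (\<lambda>y. ennreal (hn y))) {x<..}" for x
      unfolding emeasure_density_ray[OF ihp hpn(1)] emeasure_density_ray[OF ihn hpn(2)] equal_rays ..
  qed
  then have "AE y in lborel. ennreal (hp y) = ennreal (hn y)"
    by (subst (asm) sigma_finite_measure.density_unique_iff[OF sigma_finite_lborel]) auto
  then show ?thesis
    by eventually_elim (use hpn in \<open>auto simp: hp_def hn_def\<close>)
qed

text \<open>Vanishing of all interval integrals inside [p,q) forces a real function to vanish a.e.
  there: the ray integrals of its restriction to [p,q) are interval integrals.\<close>
lemma AE_zero_of_Ico_integrals_real:
  fixes g :: "real \<Rightarrow> real"
  assumes loc: "locally_integrable g"
    and zero: "\<And>a b. p \<le> a \<Longrightarrow> a \<le> b \<Longrightarrow> b \<le> q \<Longrightarrow> set_lebesgue_integral lborel {a..<b} g = 0"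
  shows "AE x in lborel. x \<in> {p..<q} \<longrightarrow> g x = 0"
proof -
  define h where "h = (\<lambda>x. indicator {p..<q} x * g x)"
  have "set_integrable lborel {p..<q} g"
    by (rule set_integrable_subset[OF loc[rule_format, of p q]]) auto
  then have ih: "integrable lborel h"
    unfolding set_integrable_def h_def by simp
  have [measurable]: "h \<in> borel_measurable lborel" using ih by (rule borel_measurable_integrable)
  have "AE y in lborel. h y = 0"
  proof (rule AE_zero_of_ray_integrals[OF ih])
    fix x
    have "integral\<^sup>L lborel (\<lambda>y. indicator {x<..} y * h y) =
        integral\<^sup>L lborel (\<lambda>y. indicator {max x p..<q} y * g y)"
    proof (rule integral_cong_AE)
      have "(\<lambda>y. indicator {max x p..<q} y * g y) = (\<lambda>y. indicator {x..} y * h y)"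
        by (auto simp: h_def indicator_def fun_eq_iff)
      then show "(\<lambda>y. indicator {max x p..<q} y * g y) \<in> borel_measurable lborel" by simp
      show "AE y in lborel. indicator {x<..} y * h y = indicator {max x p..<q} y * g y"
        using AE_lborel_singleton[of x] by eventually_elim (auto simp: h_def indicator_def)
    qed simp
    also have "\<dots> = 0"
    proof (cases "max x p \<le> q")
      case True
      then show ?thesis using zero[of "max x p" q] by (simp add: set_lebesgue_integral_def)
    next
      case False
      then have empty: "{max x p..<q} = {}" by auto
      show ?thesis unfolding empty by simp
    qed
    finally show "integral\<^sup>L lborel (\<lambda>y. indicator {x<..} y * h y) = 0" .
  qed
  then show ?thesis by eventually_elim (auto simp: h_def)
qed

lemma set_integrable_Re_Im:
  fixes g :: "'a \<Rightarrow> complex"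
  assumes "set_integrable M S g"
  shows "set_integrable M S (\<lambda>x. Re (g x))" "set_lebesgue_integral M S (\<lambda>x. Re (g x)) = Re (set_lebesgue_integral M S g)"
    and "set_integrable M S (\<lambda>x. Im (g x))" "set_lebesgue_integral M S (\<lambda>x. Im (g x)) = Im (set_lebesgue_integral M S g)"
proof -
  have i: "integrable M (\<lambda>x. indicator S x *\<^sub>R g x)" using assms unfolding set_integrable_def .
  show "set_integrable M S (\<lambda>x. Re (g x))" "set_integrable M S (\<lambda>x. Im (g x))"
    using integrable_Re[OF i] integrable_Im[OF i] unfolding set_integrable_def by simp_all
  show "set_lebesgue_integral M S (\<lambda>x. Re (g x)) = Re (set_lebesgue_integral M S g)"
    "set_lebesgue_integral M S (\<lambda>x. Im (g x)) = Im (set_lebesgue_integral M S g)"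
    unfolding set_lebesgue_integral_def using integral_Re[OF i] integral_Im[OF i] by simp_all
qed

lemma AE_zero_of_Ico_integrals:
  fixes g :: "real \<Rightarrow> complex"
  assumes loc: "locally_integrable g"
    and zero: "\<And>a b. p \<le> a \<Longrightarrow> a \<le> b \<Longrightarrow> b \<le> q \<Longrightarrow> set_lebesgue_integral lborel {a..<b} g = 0"
  shows "AE x in lborel. x \<in> {p..<q} \<longrightarrow> g x = 0"
proof -
  have int: "set_integrable lborel {a..<b} g" for a b
    by (rule set_integrable_subset[OF loc[rule_format, of a b]]) auto
  have "AE x in lborel. x \<in> {p..<q} \<longrightarrow> Re (g x) = 0"
  proof (rule AE_zero_of_Ico_integrals_real)
    show "locally_integrable (\<lambda>x. Re (g x))"
      using set_integrable_Re_Im(1) loc by blast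
    show "set_lebesgue_integral lborel {a..<b} (\<lambda>x. Re (g x)) = 0"
      if "p \<le> a" "a \<le> b" "b \<le> q" for a b
      using zero[OF that] set_integrable_Re_Im(2)[OF int] by simp
  qed
  moreover have "AE x in lborel. x \<in> {p..<q} \<longrightarrow> Im (g x) = 0"
  proof (rule AE_zero_of_Ico_integrals_real)
    show "locally_integrable (\<lambda>x. Im (g x))"
      using set_integrable_Re_Im(3) loc by blast
    show "set_lebesgue_integral lborel {a..<b} (\<lambda>x. Im (g x)) = 0"
      if "p \<le> a" "a \<le> b" "b \<le> q" for a b
      using zero[OF that] set_integrable_Re_Im(4)[OF int] by simp
  qed
  ultimately show ?thesis by eventually_elim (auto simp: complex_eq_iff)
qed

lemma AE_zero_right_half_line:
  fixes g :: "real \<Rightarrow> complex"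
  assumes loc: "locally_integrable g"
    and zero: "\<And>n k. 0 \<le> k \<Longrightarrow>
      set_lebesgue_integral lborel {real_of_int k / 2^n ..< real_of_int (k+1) / 2^n} g = 0"
  shows "AE x in lborel. 0 \<le> x \<longrightarrow> g x = 0"
proof -
  have Ico_zero: "set_lebesgue_integral lborel {a..<b} g = 0" if "0 \<le> a" "a \<le> b" for a b
  proof (rule set_integral_Ico_zero_from_dyadic[OF loc, where R="{0..}"])
    show "set_lebesgue_integral lborel {real_of_int k / 2^n ..< real_of_int (k+1) / 2^n} g = 0"
      if "real_of_int k / 2^n \<in> {0::real..}" for n k
    proof (rule zero)
      show "0 \<le> k"
        using that zero_less_power[of "2::real" n, OF zero_less_numeral] by (auto simp: zero_le_divide_iff)
    qed
    show "dyadic_floor m x \<in> {0..}" if "x \<in> {0..}" for m x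
      using that unfolding dyadic_floor_def by simp
  qed (use that in auto)
  have "AE x in lborel. x \<in> {0..<real N} \<longrightarrow> g x = 0" for N :: nat
    by (rule AE_zero_of_Ico_integrals[OF loc Ico_zero])
  then have "AE x in lborel. \<forall>N::nat. x \<in> {0..<real N} \<longrightarrow> g x = 0"
    unfolding AE_all_countable by blast
  then show ?thesis
  proof eventually_elim
    case (elim x)
    obtain N :: nat where "x < real N" using reals_Archimedean2 by blast
    then show ?case using elim by auto
  qed
qed

lemma AE_zero_left_half_line:
  fixes g :: "real \<Rightarrow> complex"
  assumes loc: "locally_integrable g"
    and zero: "\<And>n k. k < 0 \<Longrightarrow>
      set_lebesgue_integral lborel {real_of_int k / 2^n ..< real_of_int (k+1) / 2^n} g = 0"
  shows "AE x in lborel. x < 0 \<longrightarrow> g x = 0"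
proof -
  have Ico_zero: "set_lebesgue_integral lborel {a..<b} g = 0" if "a \<le> b" "b \<le> 0" for a b
  proof (rule set_integral_Ico_zero_from_dyadic[OF loc, where R="{..0}"])
    show "set_lebesgue_integral lborel {real_of_int k / 2^n ..< real_of_int (k+1) / 2^n} g = 0"
      if "real_of_int (k+1) / 2^n \<in> {..0::real}" for n k
    proof (rule zero)
      have "real_of_int (k + 1) \<le> 0"
        using that zero_less_power[of "2::real" n, OF zero_less_numeral] by (auto simp: divide_le_0_iff)
      then show "k < 0" by linarith
    qed
    show "dyadic_floor m x \<in> {..0}" if "x \<in> {..0}" for m x
      using that dyadic_floor_le[of m x] by simp
  qed (use that in auto)
  have "AE x in lborel. x \<in> {- real N..<0} \<longrightarrow> g x = 0" for N :: nat
    by (rule AE_zero_of_Ico_integrals[OF loc Ico_zero])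
  then have "AE x in lborel. \<forall>N::nat. x \<in> {- real N..<0} \<longrightarrow> g x = 0"
    unfolding AE_all_countable by blast
  then show ?thesis
  proof eventually_elim
    case (elim x)
    obtain N :: nat where "- x < real N" using reals_Archimedean2 by blast
    then show ?case using elim[rule_format, of N] by auto
  qed
qed

section \<open>Matrix weights\<close>

locale mweight =
  fixes W :: "real \<Rightarrow> complex^'n^'n"
  assumes weight: "matrix_weight W"
begin

lemma W_measurable [measurable]: "(\<lambda>x. W x $ i $ j) \<in> borel_measurable lborel"
  using weight unfolding matrix_weight_def by blast

lemma W_pos_def_AE: "AE x in lborel. pos_def_mat (W x)"
  using weight unfolding matrix_weight_def by blast

lemma W_pos_semidef_AE: "AE x in lborel. pos_semidef_mat (W x)"
  using W_pos_def_AE by eventually_elim (rule pos_def_imp_semidef)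

lemma W_locally_integrable: "set_integrable lborel {a..b} (\<lambda>x. W x $ i $ j)"
  using weight unfolding matrix_weight_def by blast

lemma W_mult_measurable [measurable]:
  assumes "g \<in> borel_measurable lborel"
  shows "(\<lambda>x. W x *v g x) \<in> borel_measurable lborel"
proof (rule measurable_vec_componentwise)
  fix i
  have [measurable]: "(\<lambda>x. g x $ j) \<in> borel_measurable lborel" for j
    by (rule measurable_vec_nth[OF assms])
  show "(\<lambda>x. (W x *v g x) $ i) \<in> borel_measurable lborel"
    unfolding matrix_vector_mult_def vec_lambda_beta by measurable
qed

lemma W_form_measurable:
  assumes "g \<in> borel_measurable lborel" "h \<in> borel_measurable lborel"
  shows "(\<lambda>x. cinner (W x *v g x) (h x)) \<in> borel_measurable lborel"
  by (rule measurable_cinner[OF W_mult_measurable[OF assms(1)] assms(2)])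

lemma W_form_locally_integrable: "set_integrable lborel {p..q} (\<lambda>x. cinner (W x *v a) b)"
proof -
  have "set_integrable lborel {p..q} (\<lambda>x. \<Sum>i\<in>UNIV. (\<Sum>j\<in>UNIV. W x $ i $ j * a $ j) * cnj (b $ i))"
    by (intro set_integrable_lincomb W_locally_integrable)
  then show ?thesis by (simp add: cinner_def matrix_vector_mult_def)
qed

lemma W_form_set_integrable:
  assumes "S \<in> sets lborel" "S \<subseteq> {p..q}"
  shows "set_integrable lborel S (\<lambda>x. cinner (W x *v a) b)"
  by (rule set_integrable_subset[OF W_form_locally_integrable assms])

text \<open>Mixed terms are dominated by the diagonal ones: if g and h have finite weighted energy
  on S, then so has the form pairing them.\<close>
lemma W_mixed_form_integrable:
  assumes S: "S \<in> sets lborel"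
    and meas: "g \<in> borel_measurable lborel" "h \<in> borel_measurable lborel"
    and ig: "integrable lborel (\<lambda>x. indicator S x *\<^sub>R cinner (W x *v g x) (g x))"
    and ih: "integrable lborel (\<lambda>x. indicator S x *\<^sub>R cinner (W x *v h x) (h x))"
  shows "integrable lborel (\<lambda>x. indicator S x *\<^sub>R cinner (W x *v g x) (h x))"
proof (rule Bochner_Integration.integrable_bound)
  define B where "B = (\<lambda>x. indicator S x *\<^sub>R ((Re (cinner (W x *v g x) (g x)) + Re (cinner (W x *v h x) (h x))) / 2))"
  show "integrable lborel B"
  proof -
    have "integrable lborel (\<lambda>x. (Re (indicator S x *\<^sub>R cinner (W x *v g x) (g x)) +
        Re (indicator S x *\<^sub>R cinner (W x *v h x) (h x))) / 2)"
      using ig ih by (intro integrable_divide Bochner_Integration.integrable_add integrable_Re)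
    then show ?thesis unfolding B_def by (simp add: algebra_simps add_divide_distrib)
  qed
  show "AE x in lborel. norm (indicator S x *\<^sub>R cinner (W x *v g x) (h x)) \<le> norm (B x)"
    using W_pos_semidef_AE
  proof eventually_elim
    case (elim x)
    note bound = pos_semidef_form_bound[OF elim, of "g x" "h x"]
    then have "0 \<le> (Re (cinner (W x *v g x) (g x)) + Re (cinner (W x *v h x) (h x))) / 2"
      by (meson norm_ge_zero order_trans)
    then show ?case unfolding B_def using bound by (auto simp: indicator_def)
  qed
  have [measurable]: "(\<lambda>x. cinner (W x *v g x) (h x)) \<in> borel_measurable lborel"
    by (rule W_form_measurable[OF meas])
  show "(\<lambda>x. indicator S x *\<^sub>R cinner (W x *v g x) (h x)) \<in> borel_measurable lborel"
    using S by measurable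
qed

lemma Wint_cinner:
  assumes S: "S \<in> sets lborel" "S \<subseteq> {p..q}"
  shows "cinner (Wint W S *v a) b = set_lebesgue_integral lborel S (\<lambda>x. cinner (W x *v a) b)"
proof -
  have int: "set_integrable lborel S (\<lambda>x. W x $ i $ j)" for i j
    by (rule set_integrable_subset[OF W_locally_integrable S])
  have "cinner (Wint W S *v a) b =
      (\<Sum>i\<in>UNIV. (\<Sum>j\<in>UNIV. set_lebesgue_integral lborel S (\<lambda>x. W x $ i $ j) * a $ j) * cnj (b $ i))"
    by (simp add: cinner_def Wint_def matrix_vector_mult_def)
  also have "\<dots> = (\<Sum>i\<in>UNIV. set_lebesgue_integral lborel S (\<lambda>x. \<Sum>j\<in>UNIV. W x $ i $ j * a $ j) * cnj (b $ i))"
    by (subst set_integral_lincomb) (auto intro: int)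
  also have "\<dots> = set_lebesgue_integral lborel S (\<lambda>x. \<Sum>i\<in>UNIV. (\<Sum>j\<in>UNIV. W x $ i $ j * a $ j) * cnj (b $ i))"
    by (rule set_integral_lincomb) (auto intro!: set_integrable_lincomb int)
  finally show ?thesis by (simp add: cinner_def matrix_vector_mult_def)
qed

lemma Wint_hermitian:
  assumes S: "S \<in> sets lborel"
  shows "hermitian_mat (Wint W S)"
proof -
  have herm_AE: "AE x in lborel. W x $ i $ j = cnj (W x $ j $ i)" for i j
    using W_pos_def_AE
  proof eventually_elim
    case (elim x)
    then have "adjoint_mat (W x) $ i $ j = W x $ i $ j"
      unfolding pos_def_mat_def hermitian_mat_def by simp
    then show ?case unfolding adjoint_mat_def by simp
  qed
  have entry: "set_lebesgue_integral lborel S (\<lambda>x. W x $ i $ j) =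
      cnj (set_lebesgue_integral lborel S (\<lambda>x. W x $ j $ i))" for i j
  proof -
    have "set_lebesgue_integral lborel S (\<lambda>x. W x $ i $ j) =
        set_lebesgue_integral lborel S (\<lambda>x. cnj (W x $ j $ i))"
    proof (rule set_lebesgue_integral_cong_AE[OF S])
      show "(\<lambda>x. cnj (W x $ j $ i)) \<in> borel_measurable lborel" by (rule measurable_cnj) simp
      show "AE x\<in>S in lborel. W x $ i $ j = cnj (W x $ j $ i)"
        using herm_AE[of i j] by eventually_elim simp
    qed simp
    then show ?thesis by (simp add: set_integral_cnj)
  qed
  show ?thesis
    unfolding hermitian_mat_def adjoint_mat_def Wint_def vec_eq_iff
  proof (intro allI)
    fix i j
    show "(\<chi> i j. cnj ((\<chi> i j. set_lebesgue_integral lborel S (\<lambda>x. W x $ i $ j)) $ j $ i)) $ i $ j =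
        (\<chi> i j. set_lebesgue_integral lborel S (\<lambda>x. W x $ i $ j)) $ i $ j"
      using entry[of j i] by simp
  qed
qed

lemma W_energy_pos:
  assumes S: "S \<in> sets lborel" "emeasure lborel S > 0"
    and int: "set_integrable lborel S (\<lambda>x. cinner (W x *v a) a)" and a: "a \<noteq> 0"
  shows "Re (set_lebesgue_integral lborel S (\<lambda>x. cinner (W x *v a) a)) > 0"
proof (rule ccontr)
  assume le: "\<not> ?thesis"
  define g where "g = (\<lambda>x. indicator S x * Re (cinner (W x *v a) a))"
  have ig: "integrable lborel g"
    using integrable_Re[OF int[unfolded set_integrable_def]] unfolding g_def by simp
  have eq: "integral\<^sup>L lborel g = Re (set_lebesgue_integral lborel S (\<lambda>x. cinner (W x *v a) a))"
    using set_integrable_Re_Im(2)[OF int] unfolding g_def set_lebesgue_integral_def by simp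
  have nn: "AE x in lborel. 0 \<le> g x"
    using W_pos_semidef_AE by eventually_elim (auto simp: g_def pos_semidef_mat_def indicator_def)
  have "integral\<^sup>L lborel g = 0" using le eq integral_nonneg_AE[OF nn] by simp
  then have "AE x in lborel. g x = 0" using integral_nonneg_eq_0_iff_AE[OF ig nn] by simp
  then have "AE x in lborel. x \<notin> S"
    using W_pos_def_AE
    by eventually_elim (use a in \<open>auto simp: g_def pos_def_mat_def indicator_def\<close>)
  then have "emeasure lborel S = 0"
    using AE_iff_measurable[OF S(1), of "\<lambda>x. x \<notin> S"] by simp
  then show False using S(2) by simp
qed

lemma Wint_pos_def:
  assumes S: "S \<in> sets lborel" "S \<subseteq> {p..q}" "emeasure lborel S > 0"
  shows "pos_def_mat (Wint W S)"
  unfolding pos_def_mat_def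
proof (intro conjI allI impI)
  show "hermitian_mat (Wint W S)" by (rule Wint_hermitian[OF S(1)])
next
  fix a :: "complex^'n" assume "a \<noteq> 0"
  then show "Re (cinner (Wint W S *v a) a) > 0"
    unfolding Wint_cinner[OF S(1,2)]
    by (intro W_energy_pos S(1,3) W_form_set_integrable[OF S(1,2)])
qed

lemma Wint_dyadic_pos_def: "pos_def_mat (Wint W (dyadic J))"
  and Wint_left_pos_def: "pos_def_mat (Wint W (dyadic_left J))"
  and Wint_right_pos_def: "pos_def_mat (Wint W (dyadic_right J))"
proof -
  obtain p q where pq: "dyadic J \<subseteq> {p..q}" using dyadic_bounded by blast
  show "pos_def_mat (Wint W (dyadic J))"
    by (rule Wint_pos_def[OF dyadic_sets pq dyadic_pos])
  show "pos_def_mat (Wint W (dyadic_left J))"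
    using pq dyadic_left_sub by (intro Wint_pos_def[OF dyadic_left_sets _ dyadic_left_pos]) blast
  show "pos_def_mat (Wint W (dyadic_right J))"
    using pq dyadic_right_sub by (intro Wint_pos_def[OF dyadic_right_sets _ dyadic_right_pos]) blast
qed

lemma Wint_split: "Wint W (dyadic J) = Wint W (dyadic_right J) + Wint W (dyadic_left J)"
  unfolding Wint_def vec_eq_iff
  using set_integral_dyadic_split[where 'a=complex] W_locally_integrable by simp

text \<open>The Haar matrix W(J) W(J_+)^{-1} W(J_-) is a positive Hermitian form: with
  z = W(J_+)^{-1} W(J_-) x its form is <W(J_-)x,x> + <W(J_+)z,z>.\<close>
lemma haar_matrix_form_pos:
  assumes "x \<noteq> 0"
  shows "Im (cinner (haar_matrix W J *v x) x) = 0 \<and> Re (cinner (haar_matrix W J *v x) x) > 0"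
proof -
  let ?B = "Wint W (dyadic_right J)" and ?C = "Wint W (dyadic_left J)"
  have Bpd: "pos_def_mat ?B" and Cpd: "pos_def_mat ?C"
    by (rule Wint_right_pos_def Wint_left_pos_def)+
  note Bherm = pos_def_mat_hermitian[OF Bpd] and Cherm = pos_def_mat_hermitian[OF Cpd]
  define z where "z = matrix_inv ?B *v (?C *v x)"
  have Bz: "?B *v z = ?C *v x" unfolding z_def by (rule pos_def_mat_inverse_apply[OF Bpd])
  have "haar_matrix W J *v x = (?B + ?C) *v z"
    unfolding haar_matrix_def Wint_split z_def by (simp add: matrix_vector_mul_assoc matrix_mul_assoc)
  then have "cinner (haar_matrix W J *v x) x = cinner (?C *v x) x + cinner (?C *v z) x"
    by (simp add: matrix_vector_mult_add_rdistrib Bz cinner_add_left)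
  also have "cinner (?C *v z) x = cnj (cinner (?B *v z) z)"
    by (simp add: hermitian_cinner[OF Cherm] Bz[symmetric] cinner_commute[of z])
  finally have form: "cinner (haar_matrix W J *v x) x = cinner (?C *v x) x + cnj (cinner (?B *v z) z)" .
  have "Re (cinner (?B *v z) z) \<ge> 0"
    using pos_def_imp_semidef[OF Bpd] unfolding pos_semidef_mat_def by blast
  moreover have "Re (cinner (?C *v x) x) > 0" using Cpd assms unfolding pos_def_mat_def by blast
  ultimately show ?thesis unfolding form
    using hermitian_form_real[OF Bherm] hermitian_form_real[OF Cherm] by simp
qed

lemma haar_weight_nonzero:
  assumes "orthonormal_eigenbasis (haar_matrix W J) v"
  shows "haar_weight W J (v j) \<noteq> 0"
  unfolding haar_weight_def
  using mat_sqrt_eigenvector_nonzero[OF assms haar_matrix_form_pos] by simp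

lemma ind_vec_eq: "ind_vec S e = (\<lambda>x. indicator S x *\<^sub>R e)"
  by (auto simp: ind_vec_def indicator_def fun_eq_iff)

lemma ind_vec_measurable: "S \<in> sets lborel \<Longrightarrow> ind_vec S (e::complex^'n) \<in> borel_measurable lborel"
  unfolding ind_vec_eq
  by (rule borel_measurable_scaleR[OF borel_measurable_indicator borel_measurable_const]) simp

lemma ind_vec_form: "cinner (W x *v ind_vec S e x) (ind_vec S e x) = indicator S x *\<^sub>R cinner (W x *v e) e"
  by (simp add: ind_vec_def indicator_def)

lemma admissible_energy_integrable:
  assumes "e \<in> admissible_vecs W S"
  shows "integrable lborel (\<lambda>x. indicator S x *\<^sub>R cinner (W x *v e) e)"
  using assms unfolding admissible_vecs_def L2W_def by (simp add: ind_vec_form)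

lemma admissible_form_integrable:
  assumes S: "S \<in> sets lborel" and "u \<in> admissible_vecs W S" "w \<in> admissible_vecs W S"
  shows "integrable lborel (\<lambda>x. indicator S x *\<^sub>R cinner (W x *v u) w)"
  using W_mixed_form_integrable[OF S borel_measurable_const borel_measurable_const
      admissible_energy_integrable admissible_energy_integrable] assms by simp

text \<open>An admissible vector c whose weighted pairings with an orthonormal basis E of the
  admissible vectors all vanish on S has zero weighted energy on S: expand c in E.\<close>
lemma energy_zero_if_orthogonal_to_basis:
  assumes S: "S \<in> sets lborel"
    and onb: "is_cONB E (admissible_vecs W S)"
    and c_adm: "c \<in> admissible_vecs W S"
    and c_orth: "\<And>e. e \<in> E \<Longrightarrow> integral\<^sup>L lborel (\<lambda>x. indicator S x *\<^sub>R cinner (W x *v c) e) = 0"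
  shows "set_lebesgue_integral lborel S (\<lambda>x. cinner (W x *v c) c) = 0"
proof -
  have EV: "E \<subseteq> admissible_vecs W S"
    and span: "admissible_vecs W S = {\<Sum>e\<in>E. a e *s e | a. True}"
    using onb unfolding is_cONB_def by auto
  obtain a where ca: "c = (\<Sum>e\<in>E. a e *s e)" using c_adm unfolding span by blast
  have "set_lebesgue_integral lborel S (\<lambda>x. cinner (W x *v c) c) =
      integral\<^sup>L lborel (\<lambda>x. \<Sum>e\<in>E. cnj (a e) * (indicator S x *\<^sub>R cinner (W x *v c) e))"
  proof -
    have "cinner (W x *v c) c = (\<Sum>e\<in>E. cnj (a e) * cinner (W x *v c) e)" for x
      by (subst (2) ca) (simp add: cinner_sum_right cinner_scale_right)
    then show ?thesis unfolding set_lebesgue_integral_def by (simp add: scaleR_sum_right)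
  qed
  also have "\<dots> = (\<Sum>e\<in>E. integral\<^sup>L lborel (\<lambda>x. cnj (a e) * (indicator S x *\<^sub>R cinner (W x *v c) e)))"
  proof (rule Bochner_Integration.integral_sum)
    fix e assume "e \<in> E"
    then show "integrable lborel (\<lambda>x. cnj (a e) * (indicator S x *\<^sub>R cinner (W x *v c) e))"
      using EV by (intro integrable_mult_right admissible_form_integrable[OF S(1) c_adm]) auto
  qed
  also have "\<dots> = (\<Sum>e\<in>E. cnj (a e) * integral\<^sup>L lborel (\<lambda>x. indicator S x *\<^sub>R cinner (W x *v c) e))"
    by (simp only: integral_mult_right_zero)
  also have "\<dots> = 0" using c_orth by simp
  finally show ?thesis .
qed

end

section \<open>Weighted moments and averages of an L^2(W) function\<close>

text \<open>The W-moment of f on S is the vector integral of W f over S.  A vector c is a W-average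
  of f on S when the moment equals W(S) c, i.e. when \<integral>_S W (f - c) = 0.\<close>
definition moment :: "(real \<Rightarrow> complex^'n^'n) \<Rightarrow> (real \<Rightarrow> complex^'n) \<Rightarrow> real set \<Rightarrow> complex^'n" where
  "moment W f S = (\<chi> i. set_lebesgue_integral lborel S (\<lambda>x. (W x *v f x) $ i))"

definition is_W_average ::
  "(real \<Rightarrow> complex^'n^'n) \<Rightarrow> (real \<Rightarrow> complex^'n) \<Rightarrow> real set \<Rightarrow> complex^'n \<Rightarrow> bool" where
  "is_W_average W f S c \<longleftrightarrow> moment W f S = Wint W S *v c"

locale mweight_fun = mweight W for W :: "real \<Rightarrow> complex^'n^'n" +
  fixes f :: "real \<Rightarrow> complex^'n"
  assumes f_L2: "f \<in> L2W W"
begin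

lemma f_measurable [measurable]: "f \<in> borel_measurable lborel"
  using f_L2 unfolding L2W_def by blast

lemma f_energy_integrable: "integrable lborel (\<lambda>x. cinner (W x *v f x) (f x))"
  using f_L2 unfolding L2W_def by blast

lemma Wf_form_set_integrable:
  assumes S: "S \<in> sets lborel" "S \<subseteq> {p..q}"
  shows "set_integrable lborel S (\<lambda>x. cinner (W x *v f x) a)"
  unfolding set_integrable_def
proof (rule W_mixed_form_integrable[OF S(1) f_measurable borel_measurable_const])
  show "integrable lborel (\<lambda>x. indicator S x *\<^sub>R cinner (W x *v f x) (f x))"
    using f_energy_integrable S(1) by (intro integrable_mult_indicator)
  show "integrable lborel (\<lambda>x. indicator S x *\<^sub>R cinner (W x *v a) a)"
    using W_form_set_integrable[OF S] unfolding set_integrable_def .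
qed

lemma Wf_set_integrable:
  assumes "S \<in> sets lborel" "S \<subseteq> {p..q}"
  shows "set_integrable lborel S (\<lambda>x. (W x *v f x) $ i)"
  using Wf_form_set_integrable[OF assms, of "axis i 1"] by (simp add: cinner_axis)

lemma moment_cinner:
  assumes S: "S \<in> sets lborel" "S \<subseteq> {p..q}"
  shows "cinner (moment W f S) a = set_lebesgue_integral lborel S (\<lambda>x. cinner (W x *v f x) a)"
proof -
  have "cinner (moment W f S) a =
      (\<Sum>i\<in>UNIV. set_lebesgue_integral lborel S (\<lambda>x. (W x *v f x) $ i) * cnj (a $ i))"
    by (simp add: cinner_def moment_def)
  also have "\<dots> = set_lebesgue_integral lborel S (\<lambda>x. \<Sum>i\<in>UNIV. (W x *v f x) $ i * cnj (a $ i))"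
    by (rule set_integral_lincomb) (rule Wf_set_integrable[OF S])
  finally show ?thesis by (simp add: cinner_def)
qed

lemma moment_split: "moment W f (dyadic J) = moment W f (dyadic_right J) + moment W f (dyadic_left J)"
  unfolding vec_eq_iff
proof (intro allI)
  fix i
  have "locally_integrable (\<lambda>x. (W x *v f x) $ i)"
    by (intro allI Wf_set_integrable) auto
  from set_integral_dyadic_split[OF this]
  show "moment W f (dyadic J) $ i = (moment W f (dyadic_right J) + moment W f (dyadic_left J)) $ i"
    unfolding moment_def by simp
qed

lemma inner_haar_fun:
  "l2w_inner W f (haar_fun W J u) =
     cnj (complex_of_real (1 / haar_weight W J u)) *
       (cinner (moment W f (dyadic_right J)) ((matrix_inv (Wint W (dyadic_right J)) ** Wint W (dyadic_left J)) *v u)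
        - cinner (moment W f (dyadic_left J)) u)"
proof -
  let ?s = "complex_of_real (1 / haar_weight W J u)"
  let ?A = "matrix_inv (Wint W (dyadic_right J)) ** Wint W (dyadic_left J)"
  let ?R = "dyadic_right J" and ?L = "dyadic_left J"
  define gR where "gR = (\<lambda>x. indicator ?R x *\<^sub>R cinner (W x *v f x) (?A *v u))"
  define gL where "gL = (\<lambda>x. indicator ?L x *\<^sub>R cinner (W x *v f x) u)"
  obtain p q where pq: "dyadic J \<subseteq> {p..q}" using dyadic_bounded by blast
  have R: "?R \<subseteq> {p..q}" and L: "?L \<subseteq> {p..q}"
    using pq dyadic_right_sub dyadic_left_sub by blast+
  have iR: "integrable lborel gR"
    using Wf_form_set_integrable[OF dyadic_right_sets R] unfolding set_integrable_def gR_def .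
  have iL: "integrable lborel gL"
    using Wf_form_set_integrable[OF dyadic_left_sets L] unfolding set_integrable_def gL_def .
  have pointwise: "cinner (W x *v f x) (haar_fun W J u x) = cnj ?s * (gR x - gL x)" for x
    unfolding haar_fun_def gR_def gL_def
    by (simp add: cinner_scale_right cinner_diff_right indicator_def diff_divide_distrib)
  have "l2w_inner W f (haar_fun W J u) = cnj ?s * (integral\<^sup>L lborel gR - integral\<^sup>L lborel gL)"
    unfolding l2w_inner_def pointwise using iR iL by simp
  also have "integral\<^sup>L lborel gR = cinner (moment W f ?R) (?A *v u)"
    unfolding moment_cinner[OF dyadic_right_sets R] gR_def set_lebesgue_integral_def ..
  also have "integral\<^sup>L lborel gL = cinner (moment W f ?L) u"
    unfolding moment_cinner[OF dyadic_left_sets L] gL_def set_lebesgue_integral_def ..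
  finally show ?thesis .
qed

text \<open>On a dyadic interval J a W-average exists and is unique, since W(J) is invertible.\<close>
lemma W_average_exists: "\<exists>c. is_W_average W f (dyadic J) c"
  unfolding is_W_average_def
  using pos_def_mat_inverse_apply[OF Wint_dyadic_pos_def] by metis

lemma W_average_unique:
  assumes "is_W_average W f (dyadic J) c" "is_W_average W f (dyadic J) c'"
  shows "c = c'"
proof -
  have "Wint W (dyadic J) *v (c - c') = 0"
    using assms unfolding is_W_average_def by (simp add: vec.diff)
  then have "c - c' = 0" by (rule pos_def_mat_kernel[OF Wint_dyadic_pos_def])
  then show ?thesis by simp
qed

lemma W_residual_locally_integrable: "locally_integrable (\<lambda>x. (W x *v (f x - c)) $ i)"
proof (intro allI)
  fix a b :: real
  have "set_integrable lborel {a..b} (\<lambda>x. \<Sum>j\<in>UNIV. W x $ i $ j * c $ j)"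
    by (rule set_integrable_lincomb) (rule W_locally_integrable)
  then have "set_integrable lborel {a..b} (\<lambda>x. (W x *v f x) $ i - (W x *v c) $ i)"
    by (intro set_integral_diff(1) Wf_set_integrable) (auto simp: matrix_vector_mult_def)
  then show "set_integrable lborel {a..b} (\<lambda>x. (W x *v (f x - c)) $ i)"
    by (simp add: vec.diff)
qed

lemma W_average_residual_integral:
  assumes S: "S \<in> sets lborel" "S \<subseteq> {p..q}"
    and avg: "is_W_average W f S c"
  shows "set_lebesgue_integral lborel S (\<lambda>x. (W x *v (f x - c)) $ i) = 0"
proof -
  have intW: "set_integrable lborel S (\<lambda>x. W x $ i $ j)" for j
    by (rule set_integrable_subset[OF W_locally_integrable S])
  have int_c: "set_integrable lborel S (\<lambda>x. (W x *v c) $ i)"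
    using set_integrable_lincomb[OF intW] by (simp add: matrix_vector_mult_def)
  have "(Wint W S *v c) $ i = set_lebesgue_integral lborel S (\<lambda>x. \<Sum>j\<in>UNIV. W x $ i $ j * c $ j)"
    unfolding Wint_def matrix_vector_mult_def using set_integral_lincomb[OF intW] by simp
  then have "(Wint W S *v c) $ i = set_lebesgue_integral lborel S (\<lambda>x. (W x *v c) $ i)"
    by (simp add: matrix_vector_mult_def)
  moreover have "moment W f S $ i = set_lebesgue_integral lborel S (\<lambda>x. (W x *v f x) $ i)"
    by (simp add: moment_def)
  ultimately show ?thesis
    using avg set_integral_diff(2)[OF Wf_set_integrable[OF S] int_c]
    unfolding is_W_average_def by (simp add: vec.diff)
qed

text \<open>Since W is a.e. positive definite, W (f - c) = 0 a.e. forces f = c a.e.\<close>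
lemma eq_AE_of_W_residual:
  assumes "\<And>i. AE x in lborel. Q x \<longrightarrow> (W x *v (f x - c)) $ i = 0"
  shows "AE x in lborel. Q x \<longrightarrow> f x = c"
proof -
  have "AE x in lborel. \<forall>i\<in>UNIV. Q x \<longrightarrow> (W x *v (f x - c)) $ i = 0"
    by (rule AE_finite_allI) (auto intro: assms)
  then show ?thesis using W_pos_def_AE
  proof eventually_elim
    case (elim x)
    show ?case
    proof
      assume "Q x"
      then have "W x *v (f x - c) = 0" using elim(1) by (simp add: vec_eq_iff)
      then have "f x - c = 0" by (rule pos_def_mat_kernel[OF elim(2)])
      then show "f x = c" by simp
    qed
  qed
qed

lemma constant_on_right_half_line:
  assumes "\<And>m k. 0 \<le> k \<Longrightarrow> is_W_average W f (dyadic (int m, k)) c"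
  shows "AE x in lborel. 0 \<le> x \<longrightarrow> f x = c"
proof (rule eq_AE_of_W_residual, rule AE_zero_right_half_line[OF W_residual_locally_integrable])
  fix n k i assume "0 \<le> (k::int)"
  obtain p q where "dyadic (int n, k) \<subseteq> {p..q}" using dyadic_bounded by blast
  from W_average_residual_integral[OF dyadic_sets this assms[OF \<open>0 \<le> k\<close>]]
  show "set_lebesgue_integral lborel {real_of_int k / 2^n ..< real_of_int (k+1) / 2^n}
      (\<lambda>x. (W x *v (f x - c)) $ i) = 0"
    unfolding dyadic_nat .
qed

lemma constant_on_left_half_line:
  assumes "\<And>m k. k < 0 \<Longrightarrow> is_W_average W f (dyadic (int m, k)) c"
  shows "AE x in lborel. x < 0 \<longrightarrow> f x = c"
proof (rule eq_AE_of_W_residual, rule AE_zero_left_half_line[OF W_residual_locally_integrable])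
  fix n k i assume "(k::int) < 0"
  obtain p q where "dyadic (int n, k) \<subseteq> {p..q}" using dyadic_bounded by blast
  from W_average_residual_integral[OF dyadic_sets this assms[OF \<open>k < 0\<close>]]
  show "set_lebesgue_integral lborel {real_of_int k / 2^n ..< real_of_int (k+1) / 2^n}
      (\<lambda>x. (W x *v (f x - c)) $ i) = 0"
    unfolding dyadic_nat .
qed

end

context mweight_fun
begin

lemma admissible_of_AE_constant:
  assumes S: "S \<in> sets lborel" and fc: "AE x in lborel. x \<in> S \<longrightarrow> f x = c"
  shows "c \<in> admissible_vecs W S"
  unfolding admissible_vecs_def L2W_def
proof (intro CollectI conjI)
  show meas: "ind_vec S c \<in> borel_measurable lborel" by (rule ind_vec_measurable[OF S])
  have "integrable lborel (\<lambda>x. indicator S x *\<^sub>R cinner (W x *v f x) (f x))"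
    using f_energy_integrable S by (intro integrable_mult_indicator)
  moreover have "(\<lambda>x. cinner (W x *v ind_vec S c x) (ind_vec S c x)) \<in> borel_measurable lborel"
    by (rule W_form_measurable[OF meas meas])
  moreover have "AE x in lborel. indicator S x *\<^sub>R cinner (W x *v f x) (f x) =
      cinner (W x *v ind_vec S c x) (ind_vec S c x)"
    using fc by eventually_elim (auto simp: ind_vec_form indicator_def)
  ultimately show "integrable lborel (\<lambda>x. cinner (W x *v ind_vec S c x) (ind_vec S c x))"
    by (rule integrable_cong_AE_imp)
qed

lemma constant_orthogonal_normalized_ind:
  assumes S: "S \<in> sets lborel" "emeasure lborel S > 0"
    and fc: "AE x in lborel. x \<in> S \<longrightarrow> f x = c"
    and e: "e \<in> admissible_vecs W S" "e \<noteq> 0"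
    and orth: "l2w_inner W f (normalized_ind W S e) = 0"
  shows "integral\<^sup>L lborel (\<lambda>x. indicator S x *\<^sub>R cinner (W x *v c) e) = 0"
proof -
  let ?s = "cnj (complex_of_real (1 / l2w_norm W (ind_vec S e)))"
  have si: "set_integrable lborel S (\<lambda>x. cinner (W x *v e) e)"
    using admissible_energy_integrable[OF e(1)] unfolding set_integrable_def .
  have "l2w_inner W (ind_vec S e) (ind_vec S e) = set_lebesgue_integral lborel S (\<lambda>x. cinner (W x *v e) e)"
    unfolding l2w_inner_def set_lebesgue_integral_def ind_vec_form ..
  then have "l2w_norm W (ind_vec S e) > 0"
    unfolding l2w_norm_def using W_energy_pos[OF S si e(2)] by simp
  then have s_nz: "?s \<noteq> 0" by simp
  have "l2w_inner W f (normalized_ind W S e) =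
      ?s * integral\<^sup>L lborel (\<lambda>x. indicator S x *\<^sub>R cinner (W x *v f x) e)"
    unfolding l2w_inner_def normalized_ind_def
    by (subst integral_mult_right_zero[symmetric], rule Bochner_Integration.integral_cong)
      (auto simp: cinner_scale_right ind_vec_def indicator_def)
  also have "integral\<^sup>L lborel (\<lambda>x. indicator S x *\<^sub>R cinner (W x *v f x) e) =
      integral\<^sup>L lborel (\<lambda>x. indicator S x *\<^sub>R cinner (W x *v c) e)"
  proof (rule integral_cong_AE)
    have [measurable]: "(\<lambda>x. cinner (W x *v f x) e) \<in> borel_measurable lborel"
      "(\<lambda>x. cinner (W x *v c) e) \<in> borel_measurable lborel"
      by (intro W_form_measurable f_measurable borel_measurable_const)+
    show "(\<lambda>x. indicator S x *\<^sub>R cinner (W x *v f x) e) \<in> borel_measurable lborel"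
      "(\<lambda>x. indicator S x *\<^sub>R cinner (W x *v c) e) \<in> borel_measurable lborel"
      using S(1) by measurable
    show "AE x in lborel. indicator S x *\<^sub>R cinner (W x *v f x) e = indicator S x *\<^sub>R cinner (W x *v c) e"
      using fc by eventually_elim (auto simp: indicator_def)
  qed
  finally show ?thesis using orth s_nz by simp
qed

text \<open>If f equals the constant c a.e. on S (of positive measure) and f is orthogonal to the
  normalized constants 1_S e for an orthonormal basis E of the admissible vectors, then c = 0:
  c itself is admissible, hence a combination of E, and its weighted energy on S vanishes.\<close>
lemma constant_part_vanishes:
  assumes S: "S \<in> sets lborel" "emeasure lborel S > 0"
    and fc: "AE x in lborel. x \<in> S \<longrightarrow> f x = c"
    and onb: "is_cONB E (admissible_vecs W S)"
    and orth: "\<And>e. e \<in> E \<Longrightarrow> l2w_inner W f (normalized_ind W S e) = 0"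
  shows "c = 0"
proof (rule ccontr)
  assume c_nz: "c \<noteq> 0"
  have EV: "E \<subseteq> admissible_vecs W S" and ee: "\<And>e. e \<in> E \<Longrightarrow> cinner e e = 1"
    using onb unfolding is_cONB_def by auto
  have c_adm: "c \<in> admissible_vecs W S" by (rule admissible_of_AE_constant[OF S(1) fc])
  have c_orth: "integral\<^sup>L lborel (\<lambda>x. indicator S x *\<^sub>R cinner (W x *v c) e) = 0" if "e \<in> E" for e
    using ee[OF that] EV that
    by (intro constant_orthogonal_normalized_ind[OF S fc _ _ orth[OF that]]) auto
  have "set_lebesgue_integral lborel S (\<lambda>x. cinner (W x *v c) c) = 0"
    by (rule energy_zero_if_orthogonal_to_basis[OF S(1) onb c_adm c_orth])
  moreover have "set_integrable lborel S (\<lambda>x. cinner (W x *v c) c)"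
    using admissible_energy_integrable[OF c_adm] unfolding set_integrable_def .
  ultimately show False using W_energy_pos[OF S _ c_nz] by simp
qed

end

section \<open>Orthogonality to the Haar system\<close>

locale haar_orthogonal = mweight_fun W f for W :: "real \<Rightarrow> complex^'n^'n" and f +
  fixes v :: "int \<times> int \<Rightarrow> 'n \<Rightarrow> complex^'n" and E1 E2 :: "(complex^'n) set"
  assumes eigenbasis: "\<And>J. orthonormal_eigenbasis (haar_matrix W J) (v J)"
    and orthogonal: "\<And>h. h \<in> haar_system W v E1 E2 \<Longrightarrow> l2w_inner W f h = 0"
begin

lemma haar_moment_balance:
  "cinner (moment W f (dyadic_right J)) ((matrix_inv (Wint W (dyadic_right J)) ** Wint W (dyadic_left J)) *v v J j)
     = cinner (moment W f (dyadic_left J)) (v J j)"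
proof -
  have "haar_fun W J (v J j) \<in> haar_system W v E1 E2"
    unfolding haar_system_def by blast
  then have "l2w_inner W f (haar_fun W J (v J j)) = 0" by (rule orthogonal)
  moreover have "haar_weight W J (v J j) \<noteq> 0" by (rule haar_weight_nonzero[OF eigenbasis])
  ultimately show ?thesis unfolding inner_haar_fun by simp
qed

lemma W_average_children:
  assumes "is_W_average W f (dyadic J) c"
  shows "is_W_average W f (dyadic_right J) c" "is_W_average W f (dyadic_left J) c"
proof -
  let ?B = "Wint W (dyadic_right J)" and ?C = "Wint W (dyadic_left J)"
  have Bpd: "pos_def_mat ?B" and Cpd: "pos_def_mat ?C"
    by (rule Wint_right_pos_def Wint_left_pos_def)+
  define a where "a = matrix_inv ?B *v moment W f (dyadic_right J)"
  have Ba: "?B *v a = moment W f (dyadic_right J)"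
    unfolding a_def by (rule pos_def_mat_inverse_apply[OF Bpd])
  have "cinner (?C *v a - moment W f (dyadic_left J)) (v J j) = 0" for j
  proof -
    have "cinner (moment W f (dyadic_right J)) ((matrix_inv ?B ** ?C) *v v J j) = cinner (?C *v a) (v J j)"
      by (simp add: Ba[symmetric] matrix_vector_mul_assoc[symmetric] pos_def_mat_inverse_apply[OF Bpd]
          hermitian_cinner[OF pos_def_mat_hermitian[OF Bpd]] hermitian_cinner[OF pos_def_mat_hermitian[OF Cpd]])
    then show ?thesis using haar_moment_balance[of J j] by (simp add: cinner_diff_left)
  qed
  then have "?C *v a - moment W f (dyadic_left J) = 0"
    using eigenbasis[of J] unfolding orthonormal_eigenbasis_def
    by (intro orthonormal_family_complete) auto
  then have Ca: "?C *v a = moment W f (dyadic_left J)" by simp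
  have "is_W_average W f (dyadic J) a"
    unfolding is_W_average_def Wint_split moment_split matrix_vector_mult_add_rdistrib Ba Ca ..
  then have "a = c" using assms by (rule W_average_unique)
  then show "is_W_average W f (dyadic_right J) c" "is_W_average W f (dyadic_left J) c"
    unfolding is_W_average_def using Ba Ca by auto
qed

lemma W_average_descendants:
  assumes "is_W_average W f (dyadic (n, k)) c" "k' div 2^m = k"
  shows "is_W_average W f (dyadic (n + int m, k')) c"
  using assms(2)
proof (induction m arbitrary: k')
  case 0
  then show ?case using assms(1) by simp
next
  case (Suc m)
  have "k' div 2 div 2^m = k" using Suc.prems by (simp add: zdiv_zmult2_eq)
  then have parent: "is_W_average W f (dyadic (n + int m, k' div 2)) c" by (rule Suc.IH)
  have level: "n + int (Suc m) = n + int m + 1" by simp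
  have "is_W_average W f (dyadic (n + int m + 1, 2 * (k' div 2) + 1)) c"
    "is_W_average W f (dyadic (n + int m + 1, 2 * (k' div 2))) c"
    using W_average_children[OF parent] unfolding dyadic_left_def dyadic_right_def by simp_all
  moreover have "k' = 2 * (k' div 2) \<or> k' = 2 * (k' div 2) + 1" by presburger
  ultimately show ?case unfolding level by auto
qed

text \<open>If k0 is its own parent index (k0 = 0 or k0 = -1), the intervals (-N, k0) form an
  increasing chain, and all dyadic intervals with index in K below this chain share a common
  W-average.\<close>
lemma common_W_average:
  assumes fixed: "k0 div 2 = k0"
    and reach: "\<And>m k. k \<in> K \<Longrightarrow> \<exists>N. k div 2^(m + N) = k0"
  shows "\<exists>c. \<forall>m. \<forall>k\<in>K. is_W_average W f (dyadic (int m, k)) c"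
proof -
  obtain c where c: "is_W_average W f (dyadic (0, k0)) c" using W_average_exists by blast
  have "is_W_average W f (dyadic (int m, k)) c" if k: "k \<in> K" for m k
  proof -
    obtain N where N: "k div 2^(m + N) = k0" using reach[OF k] by blast
    obtain c' where c': "is_W_average W f (dyadic (- int N, k0)) c'" using W_average_exists by blast
    have "k0 div 2^N = k0" using fixed by (induction N) (simp_all add: zdiv_zmult2_eq)
    then have "is_W_average W f (dyadic (0, k0)) c'"
      using W_average_descendants[OF c', where m = N and k' = k0] by simp
    then have "c' = c" using c by (rule W_average_unique)
    then show ?thesis using W_average_descendants[OF c' N] by simp
  qed
  then show ?thesis by blast
qed

lemma W_average_right: "\<exists>c. \<forall>m. \<forall>k\<in>{0..}. is_W_average W f (dyadic (int m, k)) c"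
proof (rule common_W_average)
  fix m and k :: int assume "k \<in> {0..}"
  then have "k < 2 ^ nat k"
    by (metis less_exp of_nat_less_iff nat_0_le of_nat_numeral of_nat_power atLeast_iff)
  also have "(2::int) ^ nat k \<le> 2 ^ (m + nat k)" by (rule power_increasing) auto
  finally have "k < 2 ^ (m + nat k)" .
  then show "\<exists>N. k div 2^(m + N) = 0" using \<open>k \<in> {0..}\<close> by (intro exI[of _ "nat k"]) simp
qed simp

lemma W_average_left: "\<exists>c. \<forall>m. \<forall>k\<in>{..<0}. is_W_average W f (dyadic (int m, k)) c"
proof (rule common_W_average)
  fix m and k :: int assume "k \<in> {..<0}"
  then have "- k < 2 ^ nat (- k)"
    by (metis less_exp of_nat_less_iff nat_0_le of_nat_numeral of_nat_power neg_0_le_iff_le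
        less_imp_le lessThan_iff)
  also have "(2::int) ^ nat (- k) \<le> 2 ^ (m + nat (- k))" by (rule power_increasing) auto
  finally have "- k < 2 ^ (m + nat (- k))" .
  then have "k div 2^(m + nat (- k)) = - 1"
    using \<open>k \<in> {..<0}\<close> div_pos_neg_trivial[of "- k" "- (2 ^ (m + nat (- k)))"] by simp
  then show "\<exists>N. k div 2^(m + N) = - 1" by blast
qed simp

text \<open>On each half-line f is a.e. equal to its common W-average there, which vanishes by
  orthogonality to the end functions of that half-line.\<close>
lemma f_AE_zero_right:
  assumes "is_cONB E1 (admissible_vecs W {0..})"
  shows "AE x in lborel. 0 \<le> x \<longrightarrow> f x = 0"
proof -
  obtain c where "\<forall>m. \<forall>k\<in>{0..}. is_W_average W f (dyadic (int m, k)) c"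
    using W_average_right by blast
  then have fc: "AE x in lborel. 0 \<le> x \<longrightarrow> f x = c"
    by (intro constant_on_right_half_line) auto
  have "c = 0"
  proof (rule constant_part_vanishes[OF _ _ _ assms])
    show "emeasure lborel {0::real..} > 0" by (rule emeasure_pos_if_interval[of 0 1]) auto
    show "l2w_inner W f (normalized_ind W {0..} e) = 0" if "e \<in> E1" for e
      using that by (intro orthogonal) (auto simp: haar_system_def)
  qed (use fc in auto)
  with fc show ?thesis by simp
qed

lemma f_AE_zero_left:
  assumes "is_cONB E2 (admissible_vecs W {..0})"
  shows "AE x in lborel. x < 0 \<longrightarrow> f x = 0"
proof -
  obtain c where "\<forall>m. \<forall>k\<in>{..<0}. is_W_average W f (dyadic (int m, k)) c"
    using W_average_left by blast
  then have fc: "AE x in lborel. x < 0 \<longrightarrow> f x = c"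
    by (intro constant_on_left_half_line) auto
  have "c = 0"
  proof (rule constant_part_vanishes[OF _ _ _ assms])
    show "emeasure lborel {..0::real} > 0" by (rule emeasure_pos_if_interval[of "-1" 0]) auto
    show "l2w_inner W f (normalized_ind W {..0} e) = 0" if "e \<in> E2" for e
      using that by (intro orthogonal) (auto simp: haar_system_def)
    show "AE x in lborel. x \<in> {..0} \<longrightarrow> f x = c"
      using fc AE_lborel_singleton[of 0] by eventually_elim auto
  qed simp
  with fc show ?thesis by simp
qed

end

theorem mainTheorem4:
  fixes W :: "real \<Rightarrow> complex^'n^'n"
    and v :: "int \<times> int \<Rightarrow> 'n \<Rightarrow> complex^'n"
    and E1 E2 :: "(complex^'n) set"
    and f :: "real \<Rightarrow> complex^'n"
  assumes "matrix_weight W"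
    and "\<And>J. orthonormal_eigenbasis (haar_matrix W J) (v J)"
    and "is_cONB E1 (admissible_vecs W {0..})"
    and "is_cONB E2 (admissible_vecs W {..0})"
    and "f \<in> L2W W"
    and "\<And>h. h \<in> haar_system W v E1 E2 \<Longrightarrow> l2w_inner W f h = 0"
  shows "AE x in lborel. f x = 0"
proof -
  interpret haar_orthogonal W f v E1 E2
    by unfold_locales (use assms in auto)
  from f_AE_zero_right[OF assms(3)] f_AE_zero_left[OF assms(4)]
  show ?thesis by eventually_elim auto
qed

end
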